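(* Let the system $x^+=f(x,u)$, $\zeta=g(x,u)$ and its associated system $z^+=\psi_x(z,v)$, $\eta=\psi_u(z,v)$ be as in the context. Then the associated system is flat (in the sense defined in the context) if and only if the original system is flat. More precisely, suppose the original system is flat with flat output $$y=\varphi(\zeta_{[-Q_1,-1]},x,u,u_{[1,Q_2]})$$ and parameterization $x=F_x(y_{[-R_1,R_2-1]})$, $u=F_u(y_{[-R_1,R_2]})$. Then the associated system is flat with flat output $$\hat y=\varphi\big(v_{[Q_1,1]},\,\psi_x(z,v),\,\psi_u(z,v),\,\eta_{[-1,-Q_2]}\big)=\hat\varphi(\eta_{[-Q_2,-1]},z,v,v_{[1,Q_1]}),$$ obtained from $\varphi$ by replacing each $\zeta_{[-j]}$ by $v_{[j]}$ ($1\le j\le Q_1$), $x$ by $\psi_x(z,v)$, $u$ by $\psi_u(z,v)$, and each $u_{[j]}$ by $\eta_{[-j]}$ ($1\le j\le Q_2$), componentwise. Its trajectories are related to those of $y$, for any fixed $k$, by $\hat y(k+l)=y(k-l)$, $l\in\mathbb{Z}$ (this imposes no constraint on $\hat y$). The corresponding parameterization of the associated system is $$z=F_x(\hat y_{[R_1-1,-R_2]})=F_z(\hat y_{[-R_2,R_1-1]}),\qquad v=g\big(F_x(\hat y_{[R_1,-R_2+1]}),F_u(\hat y_{[R_1,-R_2]})\big)=F_v(\hat y_{[-R_2,R_1]}),$$ and $\eta=F_u(\hat y_{[R_1,-R_2]})$; here $F_x(\hat y_{[R_1-1,-R_2]})$ means $F_x$ with its argument $y_{[j]}$ replaced by $\hat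 y_{[-j-1]}$ for $j\in[-R_1,R_2-1]$, and $F_x(\hat y_{[R_1,-R_2+1]})$, $F_u(\hat y_{[R_1,-R_2]})$ mean $F_x$, $F_u$ with $y_{[j]}$ replaced by $\hat y_{[-j]}$ (componentwise for multi-indices). Conversely, if the associated system is flat with flat output $\hat y=\hat\varphi(\eta_{[-Q_2,-1]},z,v,v_{[1,Q_1]})$, then the original system is flat with flat output $$y=\hat\varphi\big(u_{[Q_2,1]},f(x,u),g(x,u),\zeta_{[-1,-Q_1]}\big),$$ obtained by replacing each $\eta_{[-j]}$ by $u_{[j]}$, $z$ by $f(x,u)$, $v$ by $g(x,u)$, and each $v_{[j]}$ by $\zeta_{[-j]}$.
   Context: Consider a nonlinear time-invariant discrete-time system $x^{i,+}=f^i(x,u)$, $i=1,\dots,n$, with $x\in\mathbb{R}^n$, $u\in\mathbb{R}^m$, smooth $f$, $\operatorname{rank}(\partial_u f)=m$, and the submersivity condition $\operatorname{rank}(\partial_{(x,u)}f)=n$. Choose $m$ smooth functions $g(x,u)$ such that $(x,u)\mapsto(f(x,u),g(x,u))$ is a local diffeomorphism, with local inverse $x=\psi_x(x^+,\zeta)$, $u=\psi_u(x^+,\zeta)$. The associated system is $z^+=\psi_x(z,v)$, $\eta=\psi_u(z,v)$ with state $z\in\mathbb{R}^n$, input $v\in\mathbb{R}^m$, output $\eta\in\mathbb{R}^m$; its trajectories correspond one-to-one to those of $x^+=f(x,u)$, $\zeta=g(x,u)$ via $x(k+l)=z(k-l+1)$, $u(k+l)=\eta(k-l)$, $\zeta(k+l)=v(k-l)$.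 Notation: for a variable $w$, $w_{[\alpha]}$ denotes its $\alpha$-th forward shift ($w_{[\alpha]}(k)=w(k+\alpha)$) and $w_{[-\alpha]}$ its $\alpha$-th backward shift, $\alpha\ge0$; $w^+=w_{[1]}$. For a multi-component $y=(y^1,\dots,y^m)$ and multi-indices $S_1=(s_{1,1},\dots,s_{1,m})$, $S_2=(s_{2,1},\dots,s_{2,m})$, $y_{[-S_1,S_2]}$ denotes all $y^j_{[i]}$ with $-s_{1,j}\le i\le s_{2,j}$; similarly $\zeta_{[-Q_1,-1]}$, $u_{[1,Q_2]}$ etc.; $y_{[R_2-1]}$ means the shifts $y^j_{[r_{2,j}-1]}$, etc. Flatness (Definition): the system $x^+=f(x,u)$ is flat around an equilibrium $(x_0,u_0)$ if there exist an $m$-tuple of smooth functions $y^j=\varphi^j(\zeta_{[-Q_1,-1]},x,u,u_{[1,Q_2]})$, $j=1,\dots,m$ (the flat output; here $\zeta=g(x,u)$), and smooth maps $x=F_x(y_{[-R_1,R_2-1]})$, $u=F_u(y_{[-R_1,R_2]})$ (the parameterization) such that locally the $n+m$ coordinate functions $x,u$ are expressed by the flat output and its backward and forward shifts; equivalently, these maps establish a one-to-one correspondence between trajectories $(x(k),u(k))$ of the system and arbitrary sequences $y(k)\in\mathbb{R}^m$ (no difference equation imposed on $y$), where $x(k),u(k)$ may depend on finitely many past and future values of $y$ and vice versa. For the associated system, the same definition applies with $(z,v,\eta)$ in place of $(x,u,\zeta)$, $\psi_x$ in place of $f$, and $\psi_u$ in place of $g$. *)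

theory Defs
  imports "HOL-Analysis.Analysis"
begin

text \<open>A move is a one-parameter family of translations of the argument along one
coordinate direction.  The derivative of F along a move at x is the derivative at
t = 0 of t maps to F (mv t x).\<close>

definition dir_deriv :: "('x \<Rightarrow> 'b::real_normed_vector) \<Rightarrow> (real \<Rightarrow> 'x \<Rightarrow> 'x) \<Rightarrow> 'x \<Rightarrow> 'b" where
  "dir_deriv F mv x = vector_derivative (\<lambda>t. F (mv t x)) (at 0)"

fun iter_dd :: "('x \<Rightarrow> 'b::real_normed_vector) \<Rightarrow> (real \<Rightarrow> 'x \<Rightarrow> 'x) list \<Rightarrow> 'x \<Rightarrow> 'b" where
  "iter_dd F [] = F"
| "iter_dd F (mv # mvs) = dir_deriv (iter_dd F mvs) mv"

definition smooth_wrt :: "(real \<Rightarrow> 'x \<Rightarrow> 'x) set \<Rightarrow> 'x::topological_space set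
    \<Rightarrow> ('x \<Rightarrow> 'b::real_normed_vector) \<Rightarrow> bool" where
  "smooth_wrt M U F \<longleftrightarrow> open U \<and>
     (\<forall>mvs \<in> lists M. continuous_on U (iter_dd F mvs) \<and>
        (\<forall>mv \<in> M. \<forall>x \<in> U. (\<lambda>t. iter_dd F mvs (mv t x)) differentiable (at 0)))"

definition euclid_moves :: "(real \<Rightarrow> 'a::euclidean_space \<Rightarrow> 'a) set" where
  "euclid_moves = {(\<lambda>t x. x + t *\<^sub>R b) | b. b \<in> Basis}"

definition smooth_on :: "'a::euclidean_space set \<Rightarrow> ('a \<Rightarrow> 'b::real_normed_vector) \<Rightarrow> bool" where
  "smooth_on U F \<longleftrightarrow> smooth_wrt euclid_moves U F"

text \<open>Coordinate directions of a window of shifts: a function w :: int => 'a collects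
the values w j = s_[j] of the shifted variables; the coordinates are (j, b) with j in
the window W and b a basis vector of 'a.\<close>
definition win_moves :: "int set \<Rightarrow> (real \<Rightarrow> (int \<Rightarrow> 'a::euclidean_space) \<Rightarrow> (int \<Rightarrow> 'a)) set" where
  "win_moves W = {(\<lambda>t w. w(j := w j + t *\<^sub>R b)) | j b. j \<in> W \<and> b \<in> Basis}"

definition shift :: "int \<Rightarrow> (int \<Rightarrow> 'a) \<Rightarrow> (int \<Rightarrow> 'a)" where
  "shift k s = (\<lambda>j. s (k + j))"

definition traj :: "('x \<Rightarrow> 'u \<Rightarrow> 'x) \<Rightarrow> (int \<Rightarrow> 'x) \<Rightarrow> (int \<Rightarrow> 'u) \<Rightarrow> bool" where
  "traj F x u \<longleftrightarrow> (\<forall>k. x (k + 1) = F (x k) (u k))"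

definition sig :: "('x \<Rightarrow> 'u \<Rightarrow> 'z) \<Rightarrow> (int \<Rightarrow> 'x) \<Rightarrow> (int \<Rightarrow> 'u) \<Rightarrow> int \<Rightarrow> 'z \<times> 'x \<times> 'u" where
  "sig G x u = (\<lambda>k. (G (x k) (u k), x k, u k))"

text \<open>flat_with F G x0 u0 phi Fx Fu: around the equilibrium (x0,u0), phi is a flat
output of x+ = F(x,u) (with zeta = G(x,u)), and Fx, Fu its parameterization.
phi takes a window s of the combined signal, s j = (zeta_[j], x_[j], u_[j]), and
depends only on zeta_[-Q1..-1], x, u_[0..Q2]; Fx takes a window w of y (w j = y_[j])
and depends only on y_[-R1..R2-1]; Fu only on y_[-R1..R2].\<close>

definition flat_with ::
  "('x::euclidean_space \<Rightarrow> 'u::euclidean_space \<Rightarrow> 'x) \<Rightarrow> ('x \<Rightarrow> 'u \<Rightarrow> 'u) \<Rightarrow> 'x \<Rightarrow> 'u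
   \<Rightarrow> ((int \<Rightarrow> 'u \<times> 'x \<times> 'u) \<Rightarrow> 'u) \<Rightarrow> ((int \<Rightarrow> 'u) \<Rightarrow> 'x) \<Rightarrow> ((int \<Rightarrow> 'u) \<Rightarrow> 'u) \<Rightarrow> bool" where
  "flat_with F G x0 u0 phi Fx Fu \<longleftrightarrow>
    (\<exists>(Q1::nat) (Q2::nat) (R1::nat) (R2::nat) U V.
      (\<forall>s s'. (\<forall>j \<in> {- int Q1 .. -1}. fst (s j) = fst (s' j))
              \<and> fst (snd (s 0)) = fst (snd (s' 0))
              \<and> (\<forall>j \<in> {0 .. int Q2}. snd (snd (s j)) = snd (snd (s' j)))
              \<longrightarrow> phi s = phi s') \<and>
      (\<forall>w w'. (\<forall>j \<in> {- int R1 .. int R2 - 1}. w j = w' j) \<longrightarrow> Fx w = Fx w') \<and>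
      (\<forall>w w'. (\<forall>j \<in> {- int R1 .. int R2}. w j = w' j) \<longrightarrow> Fu w = Fu w') \<and>
      (\<lambda>j. (G x0 u0, x0, u0)) \<in> U \<and>
      smooth_wrt (win_moves {- int Q1 .. int Q2}) U phi \<and>
      (\<lambda>j. phi (\<lambda>i. (G x0 u0, x0, u0))) \<in> V \<and>
      smooth_wrt (win_moves {- int R1 .. int R2}) V Fx \<and>
      smooth_wrt (win_moves {- int R1 .. int R2}) V Fu \<and>
      (\<forall>x u. traj F x u \<and> (\<forall>k. shift k (sig G x u) \<in> U) \<longrightarrow>
         (let y = (\<lambda>k. phi (shift k (sig G x u)))
          in (\<forall>k. shift k y \<in> V) \<and> (\<forall>k. x k = Fx (shift k y) \<and> u k = Fu (shift k y)))) \<and>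
      (\<forall>y. (\<forall>k. shift k y \<in> V) \<longrightarrow>
         (let x = (\<lambda>k. Fx (shift k y)); u = (\<lambda>k. Fu (shift k y))
          in traj F x u \<and> (\<forall>k. shift k (sig G x u) \<in> U) \<and>
             (\<forall>k. phi (shift k (sig G x u)) = y k))))"

definition is_flat_output ::
  "('x::euclidean_space \<Rightarrow> 'u::euclidean_space \<Rightarrow> 'x) \<Rightarrow> ('x \<Rightarrow> 'u \<Rightarrow> 'u) \<Rightarrow> 'x \<Rightarrow> 'u
   \<Rightarrow> ((int \<Rightarrow> 'u \<times> 'x \<times> 'u) \<Rightarrow> 'u) \<Rightarrow> bool" where
  "is_flat_output F G x0 u0 phi \<longleftrightarrow> (\<exists>Fx Fu. flat_with F G x0 u0 phi Fx Fu)"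

definition flat ::
  "('x::euclidean_space \<Rightarrow> 'u::euclidean_space \<Rightarrow> 'x) \<Rightarrow> ('x \<Rightarrow> 'u \<Rightarrow> 'u) \<Rightarrow> 'x \<Rightarrow> 'u \<Rightarrow> bool" where
  "flat F G x0 u0 \<longleftrightarrow> (\<exists>phi. is_flat_output F G x0 u0 phi)"

text \<open>Given a map phi on windows s with s j = (a_[j], p, b_[j]) and maps P, R of two
variables, the transformed map reads: a_[j] := b_[-j], middle := P(p,b), centre of the
third slot := R(p,b), and third slot at j /= 0 := a_[-j].  With (P,R) = (psi_x, psi_u)
this is the flat output of the associated system built from phi (zeta_[-j] := v_[j],
x := psi_x(z,v), u := psi_u(z,v), u_[j] := eta_[-j]); with (P,R) = (f,g) it is the flat
output of the original system built from a flat output of the associated one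
(eta_[-j] := u_[j], z := f(x,u), v := g(x,u), v_[j] := zeta_[-j]).\<close>

definition subst_out :: "('x \<Rightarrow> 'u \<Rightarrow> 'x) \<Rightarrow> ('x \<Rightarrow> 'u \<Rightarrow> 'u)
   \<Rightarrow> ((int \<Rightarrow> 'u \<times> 'x \<times> 'u) \<Rightarrow> 'y) \<Rightarrow> ((int \<Rightarrow> 'u \<times> 'x \<times> 'u) \<Rightarrow> 'y)" where
  "subst_out P R phi = (\<lambda>s. phi (\<lambda>j.
      (snd (snd (s (- j))),
       P (fst (snd (s (- j)))) (snd (snd (s (- j)))),
       (if j = 0 then R (fst (snd (s 0))) (snd (snd (s 0))) else fst (s (- j))))))"

definition param_z :: "((int \<Rightarrow> 'u) \<Rightarrow> 'x) \<Rightarrow> ((int \<Rightarrow> 'u) \<Rightarrow> 'x)" where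
  "param_z Fx = (\<lambda>w. Fx (\<lambda>j. w (- j - 1)))"

definition param_v :: "('x \<Rightarrow> 'u \<Rightarrow> 'u) \<Rightarrow> ((int \<Rightarrow> 'u) \<Rightarrow> 'x) \<Rightarrow> ((int \<Rightarrow> 'u) \<Rightarrow> 'u)
   \<Rightarrow> ((int \<Rightarrow> 'u) \<Rightarrow> 'u)" where
  "param_v g Fx Fu = (\<lambda>w. g (Fx (\<lambda>j. w (- j))) (Fu (\<lambda>j. w (- j))))"

end

theory Submission
  imports Defs
begin

text \<open>Reversing time maps the trajectories of \<open>x\<^sup>+ = f(x, u)\<close>, \<open>\<zeta> = g(x, u)\<close> one-to-one onto
  those of the associated system \<open>z\<^sup>+ = \<psi>\<^sub>x(z, v)\<close>, \<open>\<eta> = \<psi>\<^sub>u(z, v)\<close>, via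
  \<open>x(l) = z(1 - l)\<close>, \<open>\<zeta>(l) = v(-l)\<close>, \<open>u(l) = \<eta>(-l)\<close>.  Composing a flat output of one system
  with this correspondence, and reflecting its parameterization in time, therefore gives a flat
  output of the other one with \<open>y'(l) = y(-l)\<close>; since \<open>(f, g)\<close> and \<open>\<psi>\<close> are mutually inverse, one
  argument covers both directions.

  The transformed flat output and parameterization are compositions of smooth maps, where
  smoothness on windows of shifted variables (a space with the product topology but no norm) means
  iterated derivatives along coordinate moves.  Most of the work is a chain rule for this notion;
  it rests on the fact that partial derivatives in a Euclidean argument that are continuous jointly
  in both arguments give a linearization in the Euclidean argument that is locally uniform in the
  other one.\<close>

section \<open>Smoothness along a family of moves\<close>

definition continuous_moves :: "(real \<Rightarrow> 'x::topological_space \<Rightarrow> 'x) set \<Rightarrow> bool" where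
  "continuous_moves M \<longleftrightarrow> (\<forall>mv\<in>M. \<forall>x. mv 0 x = x \<and> continuous_on UNIV (\<lambda>t. mv t x))"

lemma continuous_movesD:
  assumes "continuous_moves M" "mv \<in> M"
  shows "mv 0 x = x" "isCont (\<lambda>t. mv t x) t"
  using assms unfolding continuous_moves_def by (auto simp: continuous_on_eq_continuous_at)

lemma continuous_moves_euclid_moves: "continuous_moves euclid_moves"
  unfolding continuous_moves_def euclid_moves_def by (auto intro!: continuous_intros)

lemma eventually_move_in_open:
  assumes "continuous_moves M" "mv \<in> M" "open V" "x \<in> V"
  shows "\<forall>\<^sub>F t in nhds 0. mv t x \<in> V"
proof -
  have "open ((\<lambda>t. mv t x) -` V)"
    using assms by (intro open_vimage) (auto simp: continuous_moves_def)
  moreover have "0 \<in> (\<lambda>t. mv t x) -` V"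
    using assms continuous_movesD(1) by fastforce
  ultimately show ?thesis
    unfolding eventually_nhds by blast
qed

lemma
  assumes M: "continuous_moves M" "mv \<in> M" and V: "open V" "x \<in> V"
    and eq: "\<And>y. y \<in> V \<Longrightarrow> F y = G y"
  shows dir_deriv_cong_open: "dir_deriv F mv x = dir_deriv G mv x"
    and differentiable_move_cong_open:
      "(\<lambda>t. F (mv t x)) differentiable (at 0) \<longleftrightarrow> (\<lambda>t. G (mv t x)) differentiable (at 0)"
proof -
  have ev: "\<forall>\<^sub>F t in nhds 0. t \<in> UNIV \<longrightarrow> F (mv t x) = G (mv t x)"
    using eventually_move_in_open[OF M V] by eventually_elim (simp add: eq)
  have at0: "F (mv 0 x) = G (mv 0 x)"
    using continuous_movesD(1)[OF M] eq V(2) by simp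
  show "dir_deriv F mv x = dir_deriv G mv x"
    unfolding dir_deriv_def by (rule vector_derivative_cong_eq[OF ev refl refl UNIV_I])
  show "(\<lambda>t. F (mv t x)) differentiable (at 0) \<longleftrightarrow> (\<lambda>t. G (mv t x)) differentiable (at 0)"
    using has_vector_derivative_cong_ev[OF ev at0]
    by (simp add: differentiable_iff_scaleR has_vector_derivative_def[symmetric])
qed

lemma iter_dd_append: "iter_dd F (mvs @ mvs') = iter_dd (iter_dd F mvs') mvs"
  by (induction mvs) auto

lemma iter_dd_zero: "iter_dd (\<lambda>x. 0) mvs = (\<lambda>x. 0)"
  by (induction mvs) (auto simp: dir_deriv_def)

lemma smooth_wrt_open: "smooth_wrt M V F \<Longrightarrow> open V"
  unfolding smooth_wrt_def by blast

lemma smooth_wrt_continuous_on: "smooth_wrt M V F \<Longrightarrow> continuous_on V F"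
  unfolding smooth_wrt_def by (metis iter_dd.simps(1) lists.Nil)

lemma smooth_wrt_differentiable:
  "smooth_wrt M V F \<Longrightarrow> mv \<in> M \<Longrightarrow> x \<in> V \<Longrightarrow> (\<lambda>t. F (mv t x)) differentiable (at 0)"
  unfolding smooth_wrt_def by (metis iter_dd.simps(1) lists.Nil)

lemma smooth_wrt_has_vector_derivative:
  "smooth_wrt M V F \<Longrightarrow> mv \<in> M \<Longrightarrow> x \<in> V \<Longrightarrow>
     ((\<lambda>t. F (mv t x)) has_vector_derivative dir_deriv F mv x) (at 0)"
  unfolding dir_deriv_def by (metis smooth_wrt_differentiable vector_derivative_works)

lemma smooth_wrt_dir_deriv:
  assumes "smooth_wrt M V F" "mv \<in> M"
  shows "smooth_wrt M V (dir_deriv F mv)"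
proof -
  have "iter_dd (dir_deriv F mv) mvs = iter_dd F (mvs @ [mv])" for mvs
    by (simp add: iter_dd_append)
  then show ?thesis
    using assms unfolding smooth_wrt_def by auto
qed

lemma smooth_wrt_subset:
  assumes "smooth_wrt M V F" "M' \<subseteq> M" "open V'" "V' \<subseteq> V"
  shows "smooth_wrt M' V' F"
  using assms lists_mono[OF assms(2)] unfolding smooth_wrt_def
  by (blast intro: continuous_on_subset)

definition regular_along ::
    "(real \<Rightarrow> 'x \<Rightarrow> 'x) set \<Rightarrow> 'x::topological_space set \<Rightarrow> ('x \<Rightarrow> 'b) set
      \<Rightarrow> ('x \<Rightarrow> 'b::real_normed_vector) \<Rightarrow> bool" where
  "regular_along M V K F \<longleftrightarrow> continuous_on V F \<and>
     (\<forall>mv\<in>M. \<forall>x\<in>V. (\<lambda>t. F (mv t x)) differentiable (at 0)) \<and>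
     (\<forall>mv\<in>M. \<exists>G\<in>K. \<forall>x\<in>V. dir_deriv F mv x = G x)"

lemma regular_alongI:
  assumes "continuous_on V F"
    and "\<And>mv. mv \<in> M \<Longrightarrow> \<exists>G\<in>K. \<forall>x\<in>V. ((\<lambda>t. F (mv t x)) has_vector_derivative G x) (at 0)"
  shows "regular_along M V K F"
  using assms vector_derivative_at differentiableI_vector
  unfolding regular_along_def dir_deriv_def by metis

lemma regular_along_has_vector_derivative:
  assumes "regular_along M V K F" "mv \<in> M"
  shows "\<exists>G\<in>K. \<forall>x\<in>V. ((\<lambda>t. F (mv t x)) has_vector_derivative G x) (at 0)"
  using assms unfolding regular_along_def dir_deriv_def by (metis vector_derivative_works)

lemma regular_along_cong:
  assumes M: "continuous_moves M" and V: "open V"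
    and F: "regular_along M V K F" and eq: "\<And>x. x \<in> V \<Longrightarrow> F' x = F x"
  shows "regular_along M V K F'"
  unfolding regular_along_def
proof (intro conjI ballI)
  show "continuous_on V F'"
    using F eq continuous_on_cong unfolding regular_along_def by force
  show "(\<lambda>t. F' (mv t x)) differentiable (at 0)" if "mv \<in> M" "x \<in> V" for mv x
    using differentiable_move_cong_open[OF M that(1) V that(2), of F' F] F eq that
    unfolding regular_along_def by blast
  show "\<exists>G\<in>K. \<forall>x\<in>V. dir_deriv F' mv x = G x" if "mv \<in> M" for mv
    using dir_deriv_cong_open[OF M that V, of _ F' F] F eq that
    unfolding regular_along_def by metis
qed

lemma regular_along_add:
  assumes F1: "regular_along M V K F1" and F2: "regular_along M V K F2"
    and K: "\<And>G1 G2. G1 \<in> K \<Longrightarrow> G2 \<in> K \<Longrightarrow> (\<lambda>x. G1 x + G2 x) \<in> K"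
  shows "regular_along M V K (\<lambda>x. F1 x + F2 x)"
proof (rule regular_alongI)
  show "continuous_on V (\<lambda>x. F1 x + F2 x)"
    using continuous_on_add F1 F2 unfolding regular_along_def by blast
  fix mv assume mv: "mv \<in> M"
  from regular_along_has_vector_derivative[OF F1 mv]
  obtain G1 where G1: "G1 \<in> K" "\<forall>x\<in>V. ((\<lambda>t. F1 (mv t x)) has_vector_derivative G1 x) (at 0)" ..
  from regular_along_has_vector_derivative[OF F2 mv]
  obtain G2 where G2: "G2 \<in> K" "\<forall>x\<in>V. ((\<lambda>t. F2 (mv t x)) has_vector_derivative G2 x) (at 0)" ..
  have "((\<lambda>t. F1 (mv t x) + F2 (mv t x)) has_vector_derivative G1 x + G2 x) (at 0)" if "x \<in> V" for x
    using G1(2) G2(2) that by (intro has_vector_derivative_add) auto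
  then show "\<exists>G\<in>K. \<forall>x\<in>V. ((\<lambda>t. F1 (mv t x) + F2 (mv t x)) has_vector_derivative G x) (at 0)"
    by (intro bexI[OF _ K[OF G1(1) G2(1)]] ballI)
qed

lemma regular_along_scaleR:
  assumes M: "continuous_moves M" and r: "smooth_wrt M V r" and F: "regular_along M V K F"
    and K: "\<And>mv G. mv \<in> M \<Longrightarrow> G \<in> K \<Longrightarrow> (\<lambda>x. r x *\<^sub>R G x + dir_deriv r mv x *\<^sub>R F x) \<in> K"
  shows "regular_along M V K (\<lambda>x. r x *\<^sub>R F x)"
proof (rule regular_alongI)
  show "continuous_on V (\<lambda>x. r x *\<^sub>R F x)"
    using continuous_on_scaleR[OF smooth_wrt_continuous_on[OF r]] F unfolding regular_along_def by blast
  fix mv assume mv: "mv \<in> M"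
  from regular_along_has_vector_derivative[OF F mv]
  obtain G where G: "G \<in> K" "\<forall>x\<in>V. ((\<lambda>t. F (mv t x)) has_vector_derivative G x) (at 0)" ..
  have "((\<lambda>t. r (mv t x) *\<^sub>R F (mv t x)) has_vector_derivative
      r x *\<^sub>R G x + dir_deriv r mv x *\<^sub>R F x) (at 0)" if "x \<in> V" for x
  proof -
    have "((\<lambda>t. r (mv t x)) has_real_derivative dir_deriv r mv x) (at 0)"
      using smooth_wrt_has_vector_derivative[OF r mv that]
      by (simp add: has_real_derivative_iff_has_vector_derivative)
    from has_vector_derivative_scaleR[OF this bspec[OF G(2) that]]
    show ?thesis
      by (simp add: continuous_movesD(1)[OF M mv])
  qed
  then show "\<exists>G'\<in>K. \<forall>x\<in>V. ((\<lambda>t. r (mv t x) *\<^sub>R F (mv t x)) has_vector_derivative G' x) (at 0)"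
    by (intro bexI[OF _ K[OF mv G(1)]] ballI)
qed

lemma smooth_wrt_regular_family:
  assumes M: "continuous_moves M" and V: "open V"
    and K: "\<And>F. F \<in> K \<Longrightarrow> regular_along M V K F" and F: "F \<in> K"
  shows "smooth_wrt M V F"
proof -
  have iter: "\<exists>G\<in>K. \<forall>x\<in>V. iter_dd F mvs x = G x" if "mvs \<in> lists M" for mvs
    using that
  proof (induction mvs)
    case Nil
    then show ?case using F by auto
  next
    case (Cons mv mvs)
    then obtain G where G: "G \<in> K" "\<forall>x\<in>V. iter_dd F mvs x = G x" and mv: "mv \<in> M"
      by auto
    obtain G' where G': "G' \<in> K" "\<forall>x\<in>V. dir_deriv G mv x = G' x"
      using K[OF G(1)] mv unfolding regular_along_def by blast
    have "dir_deriv (iter_dd F mvs) mv x = G' x" if "x \<in> V" for x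
      using dir_deriv_cong_open[OF M mv V that, of "iter_dd F mvs" G] G(2) G'(2) that by simp
    then show ?case
      using G'(1) by auto
  qed
  show ?thesis
    unfolding smooth_wrt_def
  proof (intro conjI ballI V)
    fix mvs assume "mvs \<in> lists M"
    then obtain G where G: "G \<in> K" "\<forall>x\<in>V. iter_dd F mvs x = G x"
      using iter by blast
    then have "regular_along M V K (iter_dd F mvs)"
      using regular_along_cong[OF M V K[OF G(1)]] by simp
    then show "continuous_on V (iter_dd F mvs)"
      and "\<And>mv x. mv \<in> M \<Longrightarrow> x \<in> V \<Longrightarrow> (\<lambda>t. iter_dd F mvs (mv t x)) differentiable at 0"
      unfolding regular_along_def by blast+
  qed
qed

lemma smooth_wrt_compose_intertwining:
  assumes F: "smooth_wrt M U F" and U': "open U'" and T: "continuous_on U' T" "T ` U' \<subseteq> U"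
    and intertwine: "\<And>mv'. mv' \<in> M' \<Longrightarrow> \<exists>mv\<in>M. \<forall>t x. T (mv' t x) = mv t (T x)"
  shows "smooth_wrt M' U' (\<lambda>x. F (T x))"
proof -
  have iter: "\<exists>mvs\<in>lists M. \<forall>x. iter_dd (\<lambda>x. F (T x)) mvs' x = iter_dd F mvs (T x)"
    if "mvs' \<in> lists M'" for mvs'
    using that
  proof (induction mvs')
    case Nil
    then show ?case by (auto intro!: bexI[of _ "[]"])
  next
    case (Cons mv' mvs')
    then obtain mvs where mvs: "mvs \<in> lists M"
        "\<forall>x. iter_dd (\<lambda>x. F (T x)) mvs' x = iter_dd F mvs (T x)"
      by auto
    have "mv' \<in> M'"
      using Cons by simp
    then obtain mv where "mv \<in> M" "\<forall>t x. T (mv' t x) = mv t (T x)"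
      using intertwine by blast
    with mvs show ?case
      by (auto simp: dir_deriv_def intro!: bexI[of _ "mv # mvs"])
  qed
  show ?thesis
    unfolding smooth_wrt_def
  proof (intro conjI ballI U')
    fix mvs' assume "mvs' \<in> lists M'"
    then obtain mvs where mvs: "mvs \<in> lists M"
        "\<forall>x. iter_dd (\<lambda>x. F (T x)) mvs' x = iter_dd F mvs (T x)"
      using iter by blast
    have "continuous_on U (iter_dd F mvs)"
      using F mvs(1) unfolding smooth_wrt_def by blast
    then show "continuous_on U' (iter_dd (\<lambda>x. F (T x)) mvs')"
      using continuous_on_compose2[OF _ T] mvs(2) by simp
    fix mv' x assume "mv' \<in> M'" "x \<in> U'"
    then obtain mv where "mv \<in> M" "\<forall>t x. T (mv' t x) = mv t (T x)" "T x \<in> U"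
      using intertwine T(2) by blast
    then show "(\<lambda>t. iter_dd (\<lambda>x. F (T x)) mvs' (mv' t x)) differentiable at 0"
      using F mvs unfolding smooth_wrt_def by simp
  qed
qed

text \<open>Derivatives along the stationary move vanish; adding it allows intertwining maps that
  freeze some of the moves.\<close>

lemma smooth_wrt_insert_stationary:
  assumes F: "smooth_wrt M U F"
  shows "smooth_wrt (insert (\<lambda>t x. x) M) U F"
  unfolding smooth_wrt_def
proof (intro conjI ballI smooth_wrt_open[OF F])
  fix mvs assume mvs: "mvs \<in> lists (insert (\<lambda>t x. x) M)"
  have "continuous_on U (iter_dd F mvs) \<and>
      (\<forall>mv\<in>insert (\<lambda>t x. x) M. \<forall>x\<in>U. (\<lambda>t. iter_dd F mvs (mv t x)) differentiable at 0)"
  proof (cases "(\<lambda>t x. x) \<in> set mvs")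
    case True
    then obtain mvs1 mvs2 where "mvs = mvs1 @ (\<lambda>t x. x) # mvs2"
      by (meson split_list)
    moreover have "dir_deriv G (\<lambda>t x. x) = (\<lambda>x. 0)" for G :: "'a \<Rightarrow> 'b"
      by (simp add: dir_deriv_def fun_eq_iff)
    ultimately have "iter_dd F mvs = (\<lambda>x. 0)"
      by (simp add: iter_dd_append iter_dd_zero)
    then show ?thesis by simp
  next
    case False
    then have "mvs \<in> lists M"
      using mvs by (auto simp: in_lists_conv_set)
    then show ?thesis
      using F unfolding smooth_wrt_def by auto
  qed
  then show "continuous_on U (iter_dd F mvs)"
    and "\<And>mv x. mv \<in> insert (\<lambda>t x. x) M \<Longrightarrow> x \<in> U \<Longrightarrow>
      (\<lambda>t. iter_dd F mvs (mv t x)) differentiable at 0"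
    by auto
qed

lemma smooth_wrt_bounded_linear:
  assumes M: "continuous_moves M" and L: "bounded_linear L" and F: "smooth_wrt M V F"
  shows "smooth_wrt M V (\<lambda>x. L (F x))"
proof (rule smooth_wrt_regular_family[OF M smooth_wrt_open[OF F]])
  let ?K = "{(\<lambda>x. L (G x)) | G. smooth_wrt M V G}"
  show "(\<lambda>x. L (F x)) \<in> ?K"
    using F by blast
  fix H assume "H \<in> ?K"
  then obtain G where H: "H = (\<lambda>x. L (G x))" and G: "smooth_wrt M V G"
    by auto
  show "regular_along M V ?K H"
    unfolding H
  proof (rule regular_alongI)
    show "continuous_on V (\<lambda>x. L (G x))"
      by (rule continuous_on_compose2[OF linear_continuous_on[OF L] smooth_wrt_continuous_on[OF G]
            subset_UNIV])
    fix mv assume mv: "mv \<in> M"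
    show "\<exists>G'\<in>?K. \<forall>x\<in>V. ((\<lambda>t. L (G (mv t x))) has_vector_derivative G' x) (at 0)"
    proof (intro bexI ballI)
      show "((\<lambda>t. L (G (mv t x))) has_vector_derivative L (dir_deriv G mv x)) (at 0)" if "x \<in> V" for x
        by (rule bounded_linear.has_vector_derivative[OF L smooth_wrt_has_vector_derivative[OF G mv that]])
      show "(\<lambda>x. L (dir_deriv G mv x)) \<in> ?K"
        using smooth_wrt_dir_deriv[OF G mv] by blast
    qed
  qed
qed

lemma smooth_wrt_Pair:
  assumes M: "continuous_moves M" and F1: "smooth_wrt M V F1" and F2: "smooth_wrt M V F2"
  shows "smooth_wrt M V (\<lambda>x. (F1 x, F2 x))"
proof (rule smooth_wrt_regular_family[OF M smooth_wrt_open[OF F1]])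
  let ?K = "{(\<lambda>x. (G1 x, G2 x)) | G1 G2. smooth_wrt M V G1 \<and> smooth_wrt M V G2}"
  show "(\<lambda>x. (F1 x, F2 x)) \<in> ?K"
    using F1 F2 by blast
  fix H assume "H \<in> ?K"
  then obtain G1 G2 where H: "H = (\<lambda>x. (G1 x, G2 x))"
    and G: "smooth_wrt M V G1" "smooth_wrt M V G2"
    by auto
  show "regular_along M V ?K H"
    unfolding H
  proof (rule regular_alongI)
    show "continuous_on V (\<lambda>x. (G1 x, G2 x))"
      using smooth_wrt_continuous_on[OF G(1)] smooth_wrt_continuous_on[OF G(2)]
      by (intro continuous_intros)
    fix mv assume mv: "mv \<in> M"
    show "\<exists>G\<in>?K. \<forall>x\<in>V. ((\<lambda>t. (G1 (mv t x), G2 (mv t x))) has_vector_derivative G x) (at 0)"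
    proof (intro bexI ballI)
      show "((\<lambda>t. (G1 (mv t x), G2 (mv t x))) has_vector_derivative
          (dir_deriv G1 mv x, dir_deriv G2 mv x)) (at 0)" if "x \<in> V" for x
        by (intro has_vector_derivative_Pair smooth_wrt_has_vector_derivative[OF G(1) mv that]
            smooth_wrt_has_vector_derivative[OF G(2) mv that])
      show "(\<lambda>x. (dir_deriv G1 mv x, dir_deriv G2 mv x)) \<in> ?K"
        using smooth_wrt_dir_deriv[OF G(1) mv] smooth_wrt_dir_deriv[OF G(2) mv] by blast
    qed
  qed
qed

lemma smooth_on_Pair_subset:
  assumes "smooth_on UNIV F" "smooth_on UNIV G" "open A"
  shows "smooth_on A (\<lambda>p. (F p, G p))"
  using smooth_wrt_subset[OF smooth_wrt_Pair[OF continuous_moves_euclid_moves] subset_refl assms(3)] assms(1,2)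
  unfolding smooth_on_def by blast

section \<open>A chain rule for smoothness along moves\<close>

lemma norm_increment_le_segment:
  fixes \<psi> :: "real \<Rightarrow> 'b::real_normed_vector"
  assumes "\<And>s. s \<in> closed_segment 0 c \<Longrightarrow> (\<psi> has_vector_derivative D s) (at s)"
    and "\<And>s. s \<in> closed_segment 0 c \<Longrightarrow> norm (D s) \<le> B"
  shows "norm (\<psi> c - \<psi> 0) \<le> B * \<bar>c\<bar>"
proof -
  have "norm (\<psi> c - \<psi> 0) \<le> B * norm (c - 0)"
  proof (rule differentiable_bound[where f' = "\<lambda>s h. h *\<^sub>R D s"])
    show "(\<psi> has_derivative (\<lambda>h. h *\<^sub>R D s)) (at s within closed_segment 0 c)"
      if "s \<in> closed_segment 0 c" for s
      using has_vector_derivative_at_within[OF assms(1)[OF that]]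
      unfolding has_vector_derivative_def .
    show "onorm (\<lambda>h. h *\<^sub>R D s) \<le> B" if "s \<in> closed_segment 0 c" for s
      using assms(2)[OF that] by (simp add: onorm_scaleR_left[OF bounded_linear_ident] onorm_id)
  qed auto
  then show ?thesis by simp
qed

lemma norm_sum_Basis_insert_le:
  assumes "T \<subseteq> Basis" "b \<in> Basis" "b \<notin> T" "\<bar>s\<bar> \<le> \<bar>c b\<bar>"
  shows "norm ((\<Sum>b'\<in>T. c b' *\<^sub>R b') + s *\<^sub>R b) \<le> (\<Sum>b'\<in>insert b T. \<bar>c b'\<bar>)"
proof -
  have "norm ((\<Sum>b'\<in>T. c b' *\<^sub>R b') + s *\<^sub>R b) \<le> (\<Sum>b'\<in>T. norm (c b' *\<^sub>R b')) + norm (s *\<^sub>R b)"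
    by (rule order_trans[OF norm_triangle_ineq add_right_mono[OF norm_sum]])
  also have "\<dots> = (\<Sum>b'\<in>T. \<bar>c b'\<bar>) + \<bar>s\<bar>"
    using assms(1,2) by (auto simp: subset_iff intro: sum.cong)
  also have "\<dots> \<le> (\<Sum>b'\<in>insert b T. \<bar>c b'\<bar>)"
    using assms finite_subset[OF assms(1) finite_Basis] by simp
  finally show ?thesis .
qed

lemma has_vector_derivative_along_line:
  fixes h :: "'a::real_vector \<Rightarrow> 'b::real_normed_vector"
  assumes "((\<lambda>t. h (q + s *\<^sub>R b + t *\<^sub>R b)) has_vector_derivative D) (at 0)"
  shows "((\<lambda>s'. h (q + s' *\<^sub>R b)) has_vector_derivative D) (at s)"
proof -
  have "((\<lambda>t. h (q + s *\<^sub>R b + t *\<^sub>R b)) \<circ> (\<lambda>s'. s' - s) has_vector_derivative 1 *\<^sub>R D) (at s)"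
    using assms by (intro vector_diff_chain_at) (auto intro!: derivative_eq_intros)
  moreover have "(\<lambda>t. h (q + s *\<^sub>R b + t *\<^sub>R b)) \<circ> (\<lambda>s'. s' - s) = (\<lambda>s'. h (q + s' *\<^sub>R b))"
    by (simp add: fun_eq_iff algebra_simps)
  ultimately show ?thesis
    by simp
qed

text \<open>Moving from \<open>e\<^sub>0\<close> along the coordinate axes one after the other, each partial
  derivative stays close to \<open>C\<close>.\<close>

lemma staircase_increment_bound:
  fixes h :: "'e::euclidean_space \<Rightarrow> 'b::real_normed_vector"
  assumes D: "\<And>b e. b \<in> Basis \<Longrightarrow> e \<in> ball e0 r \<Longrightarrow>
      ((\<lambda>t. h (e + t *\<^sub>R b)) has_vector_derivative D b e) (at 0)"
    and close: "\<And>b e. b \<in> Basis \<Longrightarrow> e \<in> ball e0 r \<Longrightarrow> norm (D b e - C b) \<le> \<epsilon>"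
    and small: "(\<Sum>b\<in>Basis. \<bar>c b\<bar>) < r" and T: "T \<subseteq> Basis"
  shows "norm (h (e0 + (\<Sum>b\<in>T. c b *\<^sub>R b)) - h e0 - (\<Sum>b\<in>T. c b *\<^sub>R C b))
      \<le> \<epsilon> * (\<Sum>b\<in>T. \<bar>c b\<bar>)"
  using finite_subset[OF T finite_Basis] T
proof (induction T rule: finite_subset_induct')
  case empty
  then show ?case by simp
next
  case (insert b T)
  define q where "q = e0 + (\<Sum>b'\<in>T. c b' *\<^sub>R b')"
  have q_ball: "q + s *\<^sub>R b \<in> ball e0 r" if "s \<in> closed_segment 0 (c b)" for s
  proof -
    have "\<bar>s\<bar> \<le> \<bar>c b\<bar>"
      using that by (auto simp: closed_segment_eq_real_ivl split: if_splits)
    then have "norm (q + s *\<^sub>R b - e0) \<le> (\<Sum>b'\<in>insert b T. \<bar>c b'\<bar>)"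
      using norm_sum_Basis_insert_le[OF insert.hyps(3,2,4)] by (simp add: q_def)
    also have "\<dots> \<le> (\<Sum>b'\<in>Basis. \<bar>c b'\<bar>)"
      using insert.hyps by (intro sum_mono2) auto
    finally show ?thesis
      using small by (simp add: dist_norm norm_minus_commute)
  qed
  have "((\<lambda>s. h (q + s *\<^sub>R b) - s *\<^sub>R C b) has_vector_derivative D b (q + s *\<^sub>R b) - C b) (at s)"
    if "s \<in> closed_segment 0 (c b)" for s
  proof (rule has_vector_derivative_diff)
    show "((\<lambda>s. h (q + s *\<^sub>R b)) has_vector_derivative D b (q + s *\<^sub>R b)) (at s)"
      by (rule has_vector_derivative_along_line[OF D[OF insert.hyps(2) q_ball[OF that]]])
    show "((\<lambda>s. s *\<^sub>R C b) has_vector_derivative C b) (at s)"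
      by (auto intro!: derivative_eq_intros)
  qed
  from norm_increment_le_segment[OF this close[OF insert.hyps(2) q_ball]]
  have step: "norm (h (q + c b *\<^sub>R b) - h q - c b *\<^sub>R C b) \<le> \<epsilon> * \<bar>c b\<bar>"
    by (simp add: algebra_simps)
  have "norm (h (e0 + (\<Sum>b'\<in>insert b T. c b' *\<^sub>R b')) - h e0 - (\<Sum>b'\<in>insert b T. c b' *\<^sub>R C b'))
      = norm ((h (q + c b *\<^sub>R b) - h q - c b *\<^sub>R C b) +
          (h (e0 + (\<Sum>b'\<in>T. c b' *\<^sub>R b')) - h e0 - (\<Sum>b'\<in>T. c b' *\<^sub>R C b')))"
    using insert.hyps by (simp add: q_def algebra_simps)
  also have "\<dots> \<le> \<epsilon> * \<bar>c b\<bar> + \<epsilon> * (\<Sum>b'\<in>T. \<bar>c b'\<bar>)"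
    using norm_triangle_ineq step insert.IH by (rule order_trans[OF _ add_mono])
  also have "\<dots> = \<epsilon> * (\<Sum>b'\<in>insert b T. \<bar>c b'\<bar>)"
    using insert.hyps by (simp add: algebra_simps)
  finally show ?case .
qed

lemma partials_increment_bound:
  fixes h :: "'e::euclidean_space \<Rightarrow> 'b::real_normed_vector"
  assumes D: "\<And>b e. b \<in> Basis \<Longrightarrow> e \<in> ball e0 r \<Longrightarrow>
      ((\<lambda>t. h (e + t *\<^sub>R b)) has_vector_derivative D b e) (at 0)"
    and close: "\<And>b e. b \<in> Basis \<Longrightarrow> e \<in> ball e0 r \<Longrightarrow> norm (D b e - C b) \<le> \<epsilon>"
    and small: "DIM('e) * norm (e - e0) < r"
  shows "norm (h e - h e0 - (\<Sum>b\<in>Basis. ((e - e0) \<bullet> b) *\<^sub>R C b)) \<le> \<epsilon> * (DIM('e) * norm (e - e0))"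
proof -
  have l1: "(\<Sum>b\<in>Basis. \<bar>(e - e0) \<bullet> b\<bar>) \<le> DIM('e) * norm (e - e0)"
    using sum_mono[of Basis "\<lambda>b. \<bar>(e - e0) \<bullet> b\<bar>" "\<lambda>b. norm (e - e0)"] by (simp add: Basis_le_norm)
  obtain b :: 'e where "b \<in> Basis"
    using nonempty_Basis by blast
  moreover have "e0 \<in> ball e0 r"
    using small order.strict_trans1[OF zero_le_mult_iff[THEN iffD2], of "DIM('e)" "norm (e - e0)" r]
    by simp
  ultimately have "\<epsilon> \<ge> 0"
    using close order_trans[OF norm_ge_zero] by blast
  have "norm (h (e0 + (\<Sum>b\<in>Basis. ((e - e0) \<bullet> b) *\<^sub>R b)) - h e0
      - (\<Sum>b\<in>Basis. ((e - e0) \<bullet> b) *\<^sub>R C b)) \<le> \<epsilon> * (\<Sum>b\<in>Basis. \<bar>(e - e0) \<bullet> b\<bar>)"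
    using l1 small by (intro staircase_increment_bound[OF D close]) auto
  also have "\<dots> \<le> \<epsilon> * (DIM('e) * norm (e - e0))"
    using l1 \<open>\<epsilon> \<ge> 0\<close> by (rule mult_left_mono)
  finally show ?thesis
    by (simp add: euclidean_representation)
qed

text \<open>Continuity of the partial derivatives in \<open>e\<close>, jointly in \<open>(x, e)\<close>, makes the linearization
  of \<open>G(x, -)\<close> at \<open>e\<^sub>0\<close> uniform for \<open>x\<close> near \<open>x\<^sub>0\<close>; the space of \<open>x\<close> carries no linear
  structure.\<close>

lemma uniform_partial_linearization:
  fixes G :: "'x::topological_space \<times> 'e::euclidean_space \<Rightarrow> 'b::real_normed_vector"
  assumes N: "open N" "(x0, e0) \<in> N"
    and cont: "\<And>b. b \<in> Basis \<Longrightarrow> continuous_on N (Gb b)"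
    and partial: "\<And>b x e. b \<in> Basis \<Longrightarrow> (x, e) \<in> N \<Longrightarrow>
      ((\<lambda>t. G (x, e + t *\<^sub>R b)) has_vector_derivative Gb b (x, e)) (at 0)"
    and "\<epsilon> > 0"
  shows "\<exists>S \<delta>. open S \<and> x0 \<in> S \<and> \<delta> > 0 \<and> (\<forall>x\<in>S. \<forall>e. norm (e - e0) < \<delta> \<longrightarrow>
    norm (G (x, e) - G (x, e0) - (\<Sum>b\<in>Basis. ((e - e0) \<bullet> b) *\<^sub>R Gb b (x0, e0)))
      \<le> \<epsilon> * norm (e - e0))"
proof -
  define n where "n = real DIM('e)"
  have n: "n > 0"
    unfolding n_def by simp
  define W where "W = (\<Inter>b\<in>Basis. Gb b -` ball (Gb b (x0, e0)) (\<epsilon> / n) \<inter> N)"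
  have "open W"
    unfolding W_def using cont N(1) by (intro open_INT) (auto simp: continuous_on_open_vimage)
  moreover have "(x0, e0) \<in> W"
    unfolding W_def using N(2) n \<open>\<epsilon> > 0\<close> by auto
  ultimately obtain S T where ST: "open S" "open T" "x0 \<in> S" "e0 \<in> T" "S \<times> T \<subseteq> W"
    by (metis open_prod_elim mem_Sigma_iff)
  then obtain r where r: "r > 0" "ball e0 r \<subseteq> T"
    by (meson openE)
  have "norm (G (x, e) - G (x, e0) - (\<Sum>b\<in>Basis. ((e - e0) \<bullet> b) *\<^sub>R Gb b (x0, e0)))
      \<le> \<epsilon> / n * (n * norm (e - e0))" if "x \<in> S" "norm (e - e0) < r / n" for x e
    unfolding n_def
  proof (rule partials_increment_bound[where r = r])
    fix b :: 'e and e' assume "b \<in> Basis" "e' \<in> ball e0 r"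
    moreover have "(x, e') \<in> W"
      using \<open>e' \<in> ball e0 r\<close> ST(5) r(2) \<open>x \<in> S\<close> by blast
    ultimately show "((\<lambda>t. G (x, e' + t *\<^sub>R b)) has_vector_derivative Gb b (x, e')) (at 0)"
      and "norm (Gb b (x, e') - Gb b (x0, e0)) \<le> \<epsilon> / real DIM('e)"
      using partial by (auto simp: W_def n_def dist_norm norm_minus_commute)
  next
    show "DIM('e) * norm (e - e0) < r"
      using that(2) n by (simp add: n_def field_simps)
  qed
  then show ?thesis
    using ST(1,3) r(1) n by (intro exI[of _ S] exI[of _ "r / n"]) auto
qed

lemma eventually_norm_increment_le:
  assumes "(\<alpha> has_vector_derivative \<alpha>') (at 0)"
  shows "\<forall>\<^sub>F t in at 0. norm (\<alpha> t - \<alpha> 0) \<le> (norm \<alpha>' + 1) * \<bar>t\<bar>"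
proof -
  have "((\<lambda>t. norm (\<alpha> t - \<alpha> 0 - (t - 0) *\<^sub>R \<alpha>') / norm (t - 0)) \<longlongrightarrow> 0) (at 0)"
    using assms unfolding has_vector_derivative_def has_derivative_iff_norm by blast
  then have "\<forall>\<^sub>F t in at 0. norm (\<alpha> t - \<alpha> 0 - (t - 0) *\<^sub>R \<alpha>') / norm (t - 0) < 1"
    by (rule order_tendstoD(2)) simp
  then have "\<forall>\<^sub>F t in at 0. norm (\<alpha> t - \<alpha> 0 - t *\<^sub>R \<alpha>') / \<bar>t\<bar> < 1"
    by simp
  moreover have "\<forall>\<^sub>F t in at (0::real). t \<noteq> 0"
    by (simp add: eventually_at_filter)
  ultimately show ?thesis
  proof eventually_elim
    case (elim t)
    then have "norm (\<alpha> t - \<alpha> 0 - t *\<^sub>R \<alpha>') \<le> \<bar>t\<bar>"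
      by (simp add: field_simps)
    then show ?case
      using norm_triangle_ineq[of "\<alpha> t - \<alpha> 0 - t *\<^sub>R \<alpha>'" "t *\<^sub>R \<alpha>'"]
      by (simp add: algebra_simps)
  qed
qed

lemma has_vector_derivative_zero_if_little_o:
  fixes R :: "real \<Rightarrow> 'b::real_normed_vector"
  assumes \<alpha>: "(\<alpha> has_vector_derivative \<alpha>') (at 0)" and R0: "R 0 = 0"
    and small: "\<And>\<epsilon>. \<epsilon> > 0 \<Longrightarrow> \<forall>\<^sub>F t in at 0. norm (R t) \<le> \<epsilon> * norm (\<alpha> t - \<alpha> 0)"
  shows "(R has_vector_derivative 0) (at 0)"
proof -
  define C where "C = norm \<alpha>' + 1"
  have C: "C > 0"
    unfolding C_def by (simp add: add_nonneg_pos)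
  have "((\<lambda>t. norm (R t) / \<bar>t\<bar>) \<longlongrightarrow> 0) (at 0)"
  proof (rule tendstoI)
    fix \<epsilon> :: real assume "\<epsilon> > 0"
    have "\<forall>\<^sub>F t in at 0. norm (R t) \<le> \<epsilon> / (2 * C) * norm (\<alpha> t - \<alpha> 0)"
      using small[of "\<epsilon> / (2 * C)"] \<open>\<epsilon> > 0\<close> C by simp
    moreover have "\<forall>\<^sub>F t in at 0. norm (\<alpha> t - \<alpha> 0) \<le> C * \<bar>t\<bar>"
      unfolding C_def by (rule eventually_norm_increment_le[OF \<alpha>])
    moreover have "\<forall>\<^sub>F t in at (0::real). t \<noteq> 0"
      by (simp add: eventually_at_filter)
    ultimately show "\<forall>\<^sub>F t in at 0. dist (norm (R t) / \<bar>t\<bar>) 0 < \<epsilon>"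
    proof eventually_elim
      case (elim t)
      have "norm (R t) \<le> \<epsilon> / (2 * C) * (C * \<bar>t\<bar>)"
        using elim(1) mult_left_mono[OF elim(2), of "\<epsilon> / (2 * C)"] \<open>\<epsilon> > 0\<close> C by simp
      also have "\<dots> = \<epsilon> / 2 * \<bar>t\<bar>"
        using C by simp
      finally have "norm (R t) / \<bar>t\<bar> \<le> \<epsilon> / 2"
        using elim(3) by (simp add: divide_le_eq)
      then have "norm (R t) / \<bar>t\<bar> < \<epsilon>"
        using \<open>\<epsilon> > 0\<close> by linarith
      then show ?case
        by simp
    qed
  qed
  then show ?thesis
    unfolding has_vector_derivative_def has_derivative_iff_norm by (simp add: R0)
qed

lemma has_vector_derivative_uniform_linearization:
  fixes G :: "'x::topological_space \<times> 'e::euclidean_space \<Rightarrow> 'b::real_normed_vector"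
  assumes \<gamma>: "isCont \<gamma> 0" "\<gamma> 0 = x0"
    and \<alpha>: "(\<alpha> has_vector_derivative \<alpha>') (at 0)" "\<alpha> 0 = e0"
    and G: "((\<lambda>t. G (\<gamma> t, e0)) has_vector_derivative D) (at 0)"
    and L: "bounded_linear L"
    and unif: "\<And>\<epsilon>. \<epsilon> > 0 \<Longrightarrow> \<exists>S \<delta>. open S \<and> x0 \<in> S \<and> \<delta> > 0 \<and> (\<forall>x\<in>S. \<forall>e. norm (e - e0) < \<delta> \<longrightarrow>
       norm (G (x, e) - G (x, e0) - L (e - e0)) \<le> \<epsilon> * norm (e - e0))"
  shows "((\<lambda>t. G (\<gamma> t, \<alpha> t)) has_vector_derivative D + L \<alpha>') (at 0)"
proof -
  define R where "R t = G (\<gamma> t, \<alpha> t) - G (\<gamma> t, e0) - L (\<alpha> t - e0)" for t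
  have "(R has_vector_derivative 0) (at 0)"
  proof (rule has_vector_derivative_zero_if_little_o[OF \<alpha>(1)])
    show "R 0 = 0"
      using \<alpha>(2) linear_0[OF bounded_linear.linear[OF L]] by (simp add: R_def)
    fix \<epsilon> :: real assume "\<epsilon> > 0"
    then obtain S \<delta> where S: "open S" "x0 \<in> S" "\<delta> > 0" and lin: "\<forall>x\<in>S. \<forall>e. norm (e - e0) < \<delta> \<longrightarrow>
        norm (G (x, e) - G (x, e0) - L (e - e0)) \<le> \<epsilon> * norm (e - e0)"
      using unif by blast
    have "\<forall>\<^sub>F t in at 0. \<gamma> t \<in> S"
      using \<gamma> S(1,2) by (intro topological_tendstoD) (auto simp: isCont_def)
    moreover have "\<forall>\<^sub>F t in at 0. dist (\<alpha> t) e0 < \<delta>"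
      using has_vector_derivative_continuous[OF \<alpha>(1)] \<alpha>(2) S(3)
      by (intro tendstoD) (auto simp: isCont_def)
    ultimately show "\<forall>\<^sub>F t in at 0. norm (R t) \<le> \<epsilon> * norm (\<alpha> t - \<alpha> 0)"
      by eventually_elim (use lin \<alpha>(2) in \<open>simp add: R_def dist_norm\<close>)
  qed
  moreover have "((\<lambda>t. L (\<alpha> t - e0)) has_vector_derivative L \<alpha>') (at 0)"
    using bounded_linear.has_vector_derivative[OF L has_vector_derivative_diff[OF \<alpha>(1)
          has_vector_derivative_const]] by simp
  ultimately have "((\<lambda>t. G (\<gamma> t, e0) + L (\<alpha> t - e0) + R t) has_vector_derivative D + L \<alpha>' + 0) (at 0)"
    using G by (intro has_vector_derivative_add)
  then show ?thesis
    by (simp add: R_def)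
qed

definition lift_move :: "(real \<Rightarrow> 'x \<Rightarrow> 'x) \<Rightarrow> real \<Rightarrow> 'x \<times> 'e \<Rightarrow> 'x \<times> 'e" where
  "lift_move mv = (\<lambda>t p. (mv t (fst p), snd p))"

definition axis_move :: "'e::real_vector \<Rightarrow> real \<Rightarrow> 'x \<times> 'e \<Rightarrow> 'x \<times> 'e" where
  "axis_move b = (\<lambda>t p. (fst p, snd p + t *\<^sub>R b))"

definition product_moves ::
    "(real \<Rightarrow> 'x \<Rightarrow> 'x) set \<Rightarrow> (real \<Rightarrow> 'x \<times> 'e::euclidean_space \<Rightarrow> 'x \<times> 'e) set" where
  "product_moves M = lift_move ` M \<union> axis_move ` Basis"

lemma lift_move_in_product_moves: "mv \<in> M \<Longrightarrow> lift_move mv \<in> product_moves M"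
  and axis_move_in_product_moves: "b \<in> Basis \<Longrightarrow> axis_move b \<in> product_moves M"
  unfolding product_moves_def by blast+

lemma has_vector_derivative_graph:
  fixes A :: "'x::topological_space \<Rightarrow> 'e::euclidean_space" and G :: "'x \<times> 'e \<Rightarrow> 'b::real_normed_vector"
  assumes M: "continuous_moves M" "mv \<in> M" and A: "smooth_wrt M V A" "x \<in> V"
    and G: "smooth_wrt (product_moves M) N G" "(x, A x) \<in> N"
  shows "((\<lambda>t. G (mv t x, A (mv t x))) has_vector_derivative
      dir_deriv G (lift_move mv) (x, A x) +
      (\<Sum>b\<in>Basis. (dir_deriv A mv x \<bullet> b) *\<^sub>R dir_deriv G (axis_move b) (x, A x))) (at 0)"
proof (rule has_vector_derivative_uniform_linearization[where ?x0.0 = x and ?e0.0 = "A x"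
      and \<alpha>' = "dir_deriv A mv x"
      and L = "\<lambda>h. \<Sum>b\<in>Basis. (h \<bullet> b) *\<^sub>R dir_deriv G (axis_move b) (x, A x)"])
  show "isCont (\<lambda>t. mv t x) 0" "mv 0 x = x"
    using continuous_movesD[OF M] by auto
  then show "((\<lambda>t. A (mv t x)) has_vector_derivative dir_deriv A mv x) (at 0)" "A (mv 0 x) = A x"
    using smooth_wrt_has_vector_derivative[OF A(1) M(2) A(2)] by simp_all
  show "((\<lambda>t. G (mv t x, A x)) has_vector_derivative dir_deriv G (lift_move mv) (x, A x)) (at 0)"
    using smooth_wrt_has_vector_derivative[OF G(1) lift_move_in_product_moves[OF M(2)] G(2)]
    by (simp add: lift_move_def)
  show "bounded_linear (\<lambda>h. \<Sum>b\<in>Basis. (h \<bullet> b) *\<^sub>R dir_deriv G (axis_move b) (x, A x))"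
    by (intro bounded_linear_sum bounded_linear_scaleR_left bounded_linear_inner_left
        bounded_linear_compose[OF bounded_linear_scaleR_left])
  fix \<epsilon> :: real assume "\<epsilon> > 0"
  show "\<exists>S \<delta>. open S \<and> x \<in> S \<and> \<delta> > 0 \<and> (\<forall>x'\<in>S. \<forall>e. norm (e - A x) < \<delta> \<longrightarrow>
      norm (G (x', e) - G (x', A x) - (\<Sum>b\<in>Basis. ((e - A x) \<bullet> b) *\<^sub>R
        dir_deriv G (axis_move b) (x, A x))) \<le> \<epsilon> * norm (e - A x))"
  proof (rule uniform_partial_linearization[OF smooth_wrt_open[OF G(1)] G(2)])
    fix b :: 'e assume b: "b \<in> Basis"
    show "continuous_on N (dir_deriv G (axis_move b))"
      by (rule smooth_wrt_continuous_on[OF smooth_wrt_dir_deriv[OF G(1) axis_move_in_product_moves[OF b]]])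
    fix x' e assume "(x', e) \<in> N"
    from smooth_wrt_has_vector_derivative[OF G(1) axis_move_in_product_moves[OF b] this]
    show "((\<lambda>t. G (x', e + t *\<^sub>R b)) has_vector_derivative dir_deriv G (axis_move b) (x', e)) (at 0)"
      by (simp add: axis_move_def)
  qed (rule \<open>\<epsilon> > 0\<close>)
qed

text \<open>By the chain rule, the derivative of \<open>x \<mapsto> G (x, A x)\<close> along a move is again of this form,
  plus a combination of such functions whose coefficients are the smooth components of the
  derivative of \<open>A\<close>; the family below is closed under these operations.\<close>

inductive_set chain_family ::
    "(real \<Rightarrow> 'x::topological_space \<Rightarrow> 'x) set \<Rightarrow> 'x set \<Rightarrow> ('x \<times> 'e::euclidean_space) set
      \<Rightarrow> ('x \<Rightarrow> 'e) \<Rightarrow> ('x \<Rightarrow> 'b::real_normed_vector) set"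
  for M V N A
where
  graph: "smooth_wrt (product_moves M) N G \<Longrightarrow> (\<lambda>x. G (x, A x)) \<in> chain_family M V N A"
| scaleR: "smooth_wrt M V r \<Longrightarrow> F \<in> chain_family M V N A \<Longrightarrow>
    (\<lambda>x. r x *\<^sub>R F x) \<in> chain_family M V N A"
| add: "F1 \<in> chain_family M V N A \<Longrightarrow> F2 \<in> chain_family M V N A \<Longrightarrow>
    (\<lambda>x. F1 x + F2 x) \<in> chain_family M V N A"

lemma chain_family_sum:
  assumes "finite S" "S \<noteq> {}" "\<And>b. b \<in> S \<Longrightarrow> F b \<in> chain_family M V N A"
  shows "(\<lambda>x. \<Sum>b\<in>S. F b x) \<in> chain_family M V N A"
  using assms
proof (induction S rule: finite_ne_induct)
  case (singleton b)
  then show ?case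
    by simp
next
  case (insert b S)
  then have "(\<lambda>x. F b x + (\<Sum>b\<in>S. F b x)) \<in> chain_family M V N A"
    by (intro chain_family.add) auto
  then show ?case
    using insert.hyps by simp
qed

lemma chain_family_graph_derivative:
  fixes A :: "'x::topological_space \<Rightarrow> 'e::euclidean_space" and G :: "'x \<times> 'e \<Rightarrow> 'b::real_normed_vector"
  assumes M: "continuous_moves M" "mv \<in> M" and A: "smooth_wrt M V A"
    and G: "smooth_wrt (product_moves M) N G"
  shows "(\<lambda>x. dir_deriv G (lift_move mv) (x, A x) +
      (\<Sum>b\<in>Basis. (dir_deriv A mv x \<bullet> b) *\<^sub>R dir_deriv G (axis_move b) (x, A x)))
    \<in> chain_family M V N A"
proof (intro chain_family.add chain_family_sum)
  show "(\<lambda>x. dir_deriv G (lift_move mv) (x, A x)) \<in> chain_family M V N A"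
    by (rule chain_family.graph[OF smooth_wrt_dir_deriv[OF G lift_move_in_product_moves[OF M(2)]]])
  fix b :: 'e assume b: "b \<in> Basis"
  have "smooth_wrt M V (\<lambda>x. dir_deriv A mv x \<bullet> b)"
    by (rule smooth_wrt_bounded_linear[OF M(1) bounded_linear_inner_left smooth_wrt_dir_deriv[OF A M(2)]])
  then show "(\<lambda>x. (dir_deriv A mv x \<bullet> b) *\<^sub>R dir_deriv G (axis_move b) (x, A x)) \<in> chain_family M V N A"
    by (rule chain_family.scaleR[OF _ chain_family.graph[OF smooth_wrt_dir_deriv[OF G
          axis_move_in_product_moves[OF b]]]])
qed auto

lemma regular_along_chain_family:
  assumes M: "continuous_moves M" and A: "smooth_wrt M V A" and AN: "\<And>x. x \<in> V \<Longrightarrow> (x, A x) \<in> N"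
    and F: "F \<in> chain_family M V N A"
  shows "regular_along M V (chain_family M V N A) F"
  using F
proof (induction rule: chain_family.induct)
  case (graph G)
  have "continuous_on V (\<lambda>x. (x, A x))"
    by (intro continuous_intros smooth_wrt_continuous_on[OF A])
  then have "continuous_on V (\<lambda>x. G (x, A x))"
    by (rule continuous_on_compose2[OF smooth_wrt_continuous_on[OF graph]]) (use AN in auto)
  then show ?case
  proof (rule regular_alongI)
    fix mv assume mv: "mv \<in> M"
    show "\<exists>G'\<in>chain_family M V N A. \<forall>x\<in>V.
        ((\<lambda>t. G (mv t x, A (mv t x))) has_vector_derivative G' x) (at 0)"
      by (rule bexI[OF _ chain_family_graph_derivative[OF M mv A graph]])
        (auto intro: has_vector_derivative_graph[OF M mv A _ graph AN])
  qed
next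
  case (scaleR r F)
  have "(\<lambda>x. r x *\<^sub>R G x + dir_deriv r mv x *\<^sub>R F x) \<in> chain_family M V N A"
    if "mv \<in> M" "G \<in> chain_family M V N A" for mv G
    using that scaleR.hyps smooth_wrt_dir_deriv[OF scaleR.hyps(1) that(1)]
    by (intro chain_family.add chain_family.scaleR)
  then show ?case
    by (rule regular_along_scaleR[OF M scaleR.hyps(1) scaleR.IH])
next
  case (add F1 F2)
  then show ?case
    by (intro regular_along_add chain_family.add)
qed

lemma smooth_wrt_compose_graph:
  fixes A :: "'x::topological_space \<Rightarrow> 'e::euclidean_space" and G :: "'x \<times> 'e \<Rightarrow> 'b::real_normed_vector"
  assumes M: "continuous_moves M" and A: "smooth_wrt M V A"
    and G: "smooth_wrt (product_moves M) N G" and AN: "\<And>x. x \<in> V \<Longrightarrow> (x, A x) \<in> N"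
  shows "smooth_wrt M V (\<lambda>x. G (x, A x))"
  using regular_along_chain_family[OF M A AN] chain_family.graph[OF G]
  by (rule smooth_wrt_regular_family[OF M smooth_wrt_open[OF A]])

lemma smooth_wrt_compose_smooth_on:
  fixes A :: "'x::topological_space \<Rightarrow> 'e::euclidean_space" and g :: "'e \<Rightarrow> 'b::real_normed_vector"
  assumes M: "continuous_moves M" and A: "smooth_wrt M V A"
    and g: "smooth_on W g" and AW: "\<And>x. x \<in> V \<Longrightarrow> A x \<in> W"
  shows "smooth_wrt M V (\<lambda>x. g (A x))"
proof -
  have "smooth_wrt (product_moves M) (UNIV \<times> W) (\<lambda>p. g (snd p))"
  proof (rule smooth_wrt_compose_intertwining[OF smooth_wrt_insert_stationary[OF g[unfolded smooth_on_def]]])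
    show "open (UNIV \<times> W)"
      using g unfolding smooth_on_def by (simp add: open_Times smooth_wrt_open)
    show "snd ` (UNIV \<times> W) \<subseteq> W"
      by auto
    fix mv' :: "real \<Rightarrow> 'x \<times> 'e \<Rightarrow> 'x \<times> 'e" assume "mv' \<in> product_moves M"
    then show "\<exists>mv\<in>insert (\<lambda>t q. q) euclid_moves. \<forall>t p. snd (mv' t p) = mv t (snd p)"
      unfolding product_moves_def lift_move_def axis_move_def euclid_moves_def by auto
  qed (intro continuous_intros)
  then have "smooth_wrt M V (\<lambda>x. (\<lambda>p. g (snd p)) (x, A x))"
    using smooth_wrt_compose_graph[OF M A] AW by blast
  then show ?thesis
    by simp
qed

section \<open>Windows of shifted variables\<close>

definition win_move :: "int \<Rightarrow> 'a::real_vector \<Rightarrow> real \<Rightarrow> (int \<Rightarrow> 'a) \<Rightarrow> int \<Rightarrow> 'a" where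
  "win_move j b = (\<lambda>t w. w(j := w j + t *\<^sub>R b))"

lemma win_moves_eq: "win_moves W = {win_move j b | j b. j \<in> W \<and> b \<in> Basis}"
  unfolding win_moves_def win_move_def ..

lemma win_move_in_win_moves: "j \<in> W \<Longrightarrow> b \<in> Basis \<Longrightarrow> win_move j b \<in> win_moves W"
  unfolding win_moves_eq by blast

lemma win_moves_mono: "W \<subseteq> W' \<Longrightarrow> win_moves W \<subseteq> win_moves W'"
  unfolding win_moves_def by blast

lemma continuous_moves_win_moves: "continuous_moves (win_moves W)"
  unfolding continuous_moves_def win_moves_eq
proof (safe intro!: continuous_on_coordinatewise_then_product)
  fix j i and b :: 'a and w :: "int \<Rightarrow> 'a"
  show "continuous_on UNIV (\<lambda>t. win_move j b t w i)"
    by (cases "i = j") (auto simp: win_move_def intro!: continuous_intros)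
qed (simp add: win_move_def)

definition depends_on :: "int set \<Rightarrow> ((int \<Rightarrow> 'a) \<Rightarrow> 'b) \<Rightarrow> bool" where
  "depends_on D F \<longleftrightarrow> (\<forall>w w'. (\<forall>j\<in>D. w j = w' j) \<longrightarrow> F w = F w')"

lemma depends_onD: "depends_on D F \<Longrightarrow> (\<And>j. j \<in> D \<Longrightarrow> w j = w' j) \<Longrightarrow> F w = F w'"
  unfolding depends_on_def by blast

lemma depends_on_mono: "depends_on D F \<Longrightarrow> D \<subseteq> D' \<Longrightarrow> depends_on D' F"
  unfolding depends_on_def by blast

lemma depends_on_reindex: "depends_on D F \<Longrightarrow> depends_on (r ` D) (\<lambda>w. F (\<lambda>j. w (r j)))"
  unfolding depends_on_def by auto

lemma depends_on_win_move:
  "depends_on D F \<Longrightarrow> j \<notin> D \<Longrightarrow> F (win_move j b t w) = F w"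
  by (rule depends_onD) (auto simp: win_move_def)

lemma depends_on_dir_deriv:
  assumes "depends_on D F"
  shows "depends_on D (dir_deriv F (win_move j b))"
  unfolding depends_on_def
proof (intro allI impI)
  fix w w' :: "int \<Rightarrow> 'a" assume "\<forall>i\<in>D. w i = w' i"
  then have "(\<lambda>t. F (win_move j b t w)) = (\<lambda>t. F (win_move j b t w'))"
    by (intro ext depends_onD[OF assms]) (auto simp: win_move_def)
  then show "dir_deriv F (win_move j b) w = dir_deriv F (win_move j b) w'"
    by (simp add: dir_deriv_def)
qed

lemma dir_deriv_win_move_outside:
  "depends_on D F \<Longrightarrow> j \<notin> D \<Longrightarrow> dir_deriv F (win_move j b) = (\<lambda>w. 0)"
  by (simp add: dir_deriv_def depends_on_win_move fun_eq_iff)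

lemma depends_on_iter_dd:
  assumes "depends_on D F" "mvs \<in> lists (win_moves UNIV)"
  shows "depends_on D (iter_dd F mvs)"
  using assms(2)
proof (induction mvs)
  case Nil
  then show ?case using assms(1) by simp
next
  case (Cons mv mvs)
  then obtain j b where "mv = win_move j b"
    unfolding win_moves_eq by auto
  then show ?case
    using depends_on_dir_deriv Cons by simp
qed

lemma iter_dd_outside_window:
  assumes D: "depends_on D F" and mvs: "mvs \<in> lists (win_moves UNIV)" "mvs \<notin> lists (win_moves D)"
  shows "iter_dd F mvs = (\<lambda>w. 0)"
proof -
  obtain mv where "mv \<in> set mvs" "mv \<notin> win_moves D"
    using mvs(2) by (auto simp: in_lists_conv_set)
  moreover obtain j b where "b \<in> Basis" "mv = win_move j b"
    using mvs(1) \<open>mv \<in> set mvs\<close> unfolding win_moves_eq by auto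
  moreover obtain pre post where "mvs = pre @ mv # post"
    using split_list[OF \<open>mv \<in> set mvs\<close>] by blast
  ultimately have "j \<notin> D" "post \<in> lists (win_moves UNIV)" "mvs = pre @ win_move j b # post"
    using mvs(1) win_move_in_win_moves by auto
  then have "dir_deriv (iter_dd F post) (win_move j b) = (\<lambda>w. 0)"
    using dir_deriv_win_move_outside[OF depends_on_iter_dd[OF D]] by blast
  then show ?thesis
    using \<open>mvs = pre @ win_move j b # post\<close> by (simp add: iter_dd_append iter_dd_zero)
qed

lemma smooth_wrt_win_moves_UNIV:
  fixes F :: "(int \<Rightarrow> 'a::euclidean_space) \<Rightarrow> 'b::real_normed_vector"
  assumes F: "smooth_wrt (win_moves W) V F" and D: "depends_on D F" "D \<subseteq> W"
  shows "smooth_wrt (win_moves UNIV) V F"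
  unfolding smooth_wrt_def
proof (intro conjI ballI smooth_wrt_open[OF F])
  fix mvs :: "(real \<Rightarrow> (int \<Rightarrow> 'a) \<Rightarrow> int \<Rightarrow> 'a) list"
  assume mvs: "mvs \<in> lists (win_moves UNIV)"
  have "continuous_on V (iter_dd F mvs) \<and>
      (\<forall>mv\<in>win_moves UNIV. \<forall>w\<in>V. (\<lambda>t. iter_dd F mvs (mv t w)) differentiable (at 0))"
  proof (cases "mvs \<in> lists (win_moves W)")
    case True
    have "(\<lambda>t. iter_dd F mvs (win_move j b t w)) differentiable (at 0)"
      if "b \<in> Basis" "w \<in> V" for j b w
    proof (cases "j \<in> W")
      case True
      then show ?thesis
        using F \<open>mvs \<in> lists (win_moves W)\<close> that win_move_in_win_moves unfolding smooth_wrt_def by blast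
    next
      case False
      then have "j \<notin> D"
        using D(2) by blast
      then show ?thesis
        using depends_on_win_move[OF depends_on_iter_dd[OF D(1) mvs]] by simp
    qed
    moreover have "continuous_on V (iter_dd F mvs)"
      using F True unfolding smooth_wrt_def by blast
    ultimately show ?thesis
      unfolding win_moves_eq[of UNIV] by blast
  next
    case False
    then have "mvs \<notin> lists (win_moves D)"
      using lists_mono[OF win_moves_mono[OF D(2)]] by blast
    then show ?thesis
      using iter_dd_outside_window[OF D(1) mvs] by simp
  qed
  then show "continuous_on V (iter_dd F mvs)"
    and "\<And>mv w. mv \<in> win_moves UNIV \<Longrightarrow> w \<in> V \<Longrightarrow>
      (\<lambda>t. iter_dd F mvs (mv t w)) differentiable (at 0)"
    by blast+
qed

lemma smooth_wrt_reflect: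
  fixes F :: "(int \<Rightarrow> 'a::euclidean_space) \<Rightarrow> 'b::real_normed_vector"
  assumes F: "smooth_wrt (win_moves UNIV) V F"
  shows "smooth_wrt (win_moves UNIV) {w. (\<lambda>i. w (c - i)) \<in> V} (\<lambda>w. F (\<lambda>i. w (c - i)))"
proof (rule smooth_wrt_compose_intertwining[OF F])
  have cont: "continuous_on UNIV (\<lambda>w::int \<Rightarrow> 'a. \<lambda>i. w (c - i))"
    by (intro continuous_on_coordinatewise_then_product) simp
  then show "open {w::int \<Rightarrow> 'a. (\<lambda>i. w (c - i)) \<in> V}"
    using open_vimage[OF smooth_wrt_open[OF F]] by (simp add: vimage_def)
  show "continuous_on {w. (\<lambda>i. w (c - i)) \<in> V} (\<lambda>w. \<lambda>i. w (c - i))"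
    using cont by (rule continuous_on_subset) simp
  fix mv' :: "real \<Rightarrow> (int \<Rightarrow> 'a) \<Rightarrow> int \<Rightarrow> 'a" assume "mv' \<in> win_moves UNIV"
  then obtain j b where "b \<in> Basis" "mv' = win_move j b"
    unfolding win_moves_eq by blast
  then show "\<exists>mv\<in>win_moves UNIV. \<forall>t w. (\<lambda>i. mv' t w (c - i)) = mv t (\<lambda>i. w (c - i))"
    by (intro bexI[of _ "win_move (c - j) b"] win_move_in_win_moves)
      (auto simp: win_move_def fun_eq_iff)
qed auto

text \<open>For the window \<open>s\<close> at time \<open>k\<close> of the signal \<open>(\<eta>, z, v)\<close> of the associated system,
  \<open>mirror_window (s, \<psi> (window_centre s))\<close> is the window at time \<open>-k\<close> of the signal
  \<open>(\<zeta>, x, u)\<close> of the original system (see \<open>mirror_window_shift_sig\<close>): only its centre needs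
  \<open>\<psi>\<close>, elsewhere the state is read off a shifted state of \<open>s\<close>.\<close>

definition mirror_window :: "(int \<Rightarrow> 'a \<times> 'b \<times> 'c) \<times> ('b \<times> 'a) \<Rightarrow> int \<Rightarrow> 'c \<times> 'b \<times> 'a" where
  "mirror_window p = (\<lambda>i. if i = 0 then (snd (snd (fst p 0)), snd p)
     else (snd (snd (fst p (- i))), fst (snd (fst p (1 - i))), fst (fst p (- i))))"

definition window_centre :: "(int \<Rightarrow> 'a \<times> 'b \<times> 'c) \<Rightarrow> 'b \<times> 'c" where
  "window_centre s = (fst (snd (s 0)), snd (snd (s 0)))"

lemma continuous_on_mirror_window:
  "continuous_on UNIV (mirror_window :: (int \<Rightarrow> 'a::topological_space \<times> 'b::topological_space
      \<times> 'c::topological_space) \<times> ('b \<times> 'a) \<Rightarrow> _)"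
proof (rule continuous_on_coordinatewise_then_product)
  have coord: "continuous_on UNIV (\<lambda>p::(int \<Rightarrow> 'a \<times> 'b \<times> 'c) \<times> ('b \<times> 'a). fst p k)" for k
    by (rule continuous_on_product_then_coordinatewise[OF continuous_on_fst[OF continuous_on_id]])
  show "continuous_on UNIV (\<lambda>p::(int \<Rightarrow> 'a \<times> 'b \<times> 'c) \<times> ('b \<times> 'a). mirror_window p i)" for i
  proof (cases "i = 0")
    case True
    show ?thesis
      unfolding mirror_window_def
      using continuous_on_Pair[OF continuous_on_snd[OF continuous_on_snd[OF coord[of 0]]]
          continuous_on_snd[OF continuous_on_id]]
      by (simp add: True)
  next
    case False
    show ?thesis
      unfolding mirror_window_def by (simp add: False) (intro continuous_intros coord)
  qed
qed

lemma continuous_on_window_centre: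
  "continuous_on S (window_centre :: (int \<Rightarrow> 'a::topological_space \<times> 'b::topological_space
      \<times> 'c::topological_space) \<Rightarrow> _)"
proof -
  have "continuous_on S (\<lambda>s::int \<Rightarrow> 'a \<times> 'b \<times> 'c. s 0)"
    by (rule continuous_on_product_then_coordinatewise[OF continuous_on_id])
  then show ?thesis
    unfolding window_centre_def by (intro continuous_intros)
qed

lemma Basis_triple_cases:
  assumes "b \<in> (Basis :: ('a::euclidean_space \<times> 'b::euclidean_space \<times> 'c::euclidean_space) set)"
  obtains b1 where "b1 \<in> Basis" "b = (b1, 0, 0)"
    | b2 where "b2 \<in> Basis" "b = (0, b2, 0)"
    | b3 where "b3 \<in> Basis" "b = (0, 0, b3)"
  using assms by (auto simp: Basis_prod_def zero_prod_def)

lemma Basis_triple_intros: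
  fixes b :: "'a::euclidean_space" and b' :: "'b::euclidean_space" and b'' :: "'c::euclidean_space"
  shows "b \<in> Basis \<Longrightarrow> (b, 0, 0) \<in> (Basis :: ('a \<times> 'b \<times> 'c) set)"
    and "b' \<in> Basis \<Longrightarrow> (0, b', 0) \<in> (Basis :: ('a \<times> 'b \<times> 'c) set)"
    and "b'' \<in> Basis \<Longrightarrow> (0, 0, b'') \<in> (Basis :: ('a \<times> 'b \<times> 'c) set)"
  by (auto simp: Basis_prod_def zero_prod_def)

text \<open>Each coordinate of the window reappears at a reflected position of the mirrored window,
  except the state and input at the centre, which are overwritten; so every coordinate move is
  intertwined with a coordinate move or with the stationary one.\<close>

lemma mirror_window_lift_move:
  fixes b :: "'a::euclidean_space \<times> 'b::euclidean_space \<times> 'c::euclidean_space"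
  assumes "b \<in> Basis"
  shows "\<exists>mv\<in>insert (\<lambda>t q. q) (win_moves UNIV). \<forall>t p.
    mirror_window (lift_move (win_move j b) t p :: _ \<times> ('b \<times> 'a)) = mv t (mirror_window p)"
proof -
  let ?M = "insert (\<lambda>t q. q) (win_moves UNIV)
    :: (real \<Rightarrow> (int \<Rightarrow> 'c \<times> 'b \<times> 'a) \<Rightarrow> int \<Rightarrow> 'c \<times> 'b \<times> 'a) set"
  have win: "win_move i b' \<in> ?M" if "b' \<in> Basis" for i b'
    using win_move_in_win_moves[OF UNIV_I that] by blast
  from assms show ?thesis
  proof (cases rule: Basis_triple_cases)
    case (1 b1)
    have "(if j = 0 then (\<lambda>t q. q) else win_move (- j) (0, 0, b1)) \<in> ?M"
      using win[OF Basis_triple_intros(3)[OF 1(1)], of "- j"] by simp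
    then show ?thesis
      by (rule bexI[rotated]) (use 1(2) in \<open>auto simp: mirror_window_def lift_move_def win_move_def\<close>)
  next
    case (2 b2)
    have "(if j = 1 then (\<lambda>t q. q) else win_move (1 - j) (0, b2, 0)) \<in> ?M"
      using win[OF Basis_triple_intros(2)[OF 2(1)], of "1 - j"] by simp
    then show ?thesis
      by (rule bexI[rotated]) (use 2(2) in \<open>auto simp: mirror_window_def lift_move_def win_move_def\<close>)
  next
    case (3 b3)
    have "win_move (- j) (b3, 0, 0) \<in> ?M"
      using win[OF Basis_triple_intros(1)[OF 3(1)]] .
    then show ?thesis
      by (rule bexI[rotated]) (use 3(2) in \<open>auto simp: mirror_window_def lift_move_def win_move_def\<close>)
  qed
qed

lemma mirror_window_axis_move:
  fixes b :: "'b::euclidean_space \<times> 'a::euclidean_space"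
  assumes "b \<in> Basis"
  shows "\<forall>t p. mirror_window (axis_move b t p :: (int \<Rightarrow> 'a \<times> 'b \<times> 'c::euclidean_space) \<times> _)
    = win_move 0 (0, b) t (mirror_window p)"
  by (auto simp: mirror_window_def axis_move_def win_move_def fun_eq_iff)

lemma mirror_window_intertwines:
  fixes mv' :: "real \<Rightarrow> (int \<Rightarrow> 'a::euclidean_space \<times> 'b::euclidean_space \<times> 'c::euclidean_space)
      \<times> ('b \<times> 'a) \<Rightarrow> _"
  assumes "mv' \<in> product_moves (win_moves UNIV)"
  shows "\<exists>mv\<in>insert (\<lambda>t q. q) (win_moves UNIV). \<forall>t p. mirror_window (mv' t p) = mv t (mirror_window p)"
proof -
  from assms consider (lift) j b where "b \<in> Basis" "mv' = lift_move (win_move j b)"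
    | (axis) b where "b \<in> Basis" "mv' = axis_move b"
    unfolding product_moves_def win_moves_eq by blast
  then show ?thesis
  proof cases
    case (lift j b)
    then show ?thesis
      using mirror_window_lift_move by blast
  next
    case (axis b)
    moreover have "(0, b) \<in> (Basis :: ('c \<times> 'b \<times> 'a) set)"
      using axis(1) by (auto simp: Basis_prod_def)
    ultimately show ?thesis
      using mirror_window_axis_move win_move_in_win_moves by blast
  qed
qed

lemma window_centre_intertwines:
  fixes mv' :: "real \<Rightarrow> (int \<Rightarrow> 'a::euclidean_space \<times> 'b::euclidean_space \<times> 'c::euclidean_space) \<Rightarrow> _"
  assumes "mv' \<in> win_moves UNIV"
  shows "\<exists>mv\<in>insert (\<lambda>t q. q) euclid_moves. \<forall>t s. window_centre (mv' t s) = mv t (window_centre s)"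
proof -
  have euclid: "(\<lambda>t q. q + t *\<^sub>R b) \<in> insert (\<lambda>t q. q) euclid_moves" if "b \<in> Basis" for b
    using that unfolding euclid_moves_def by blast
  from assms obtain j b where jb: "b \<in> Basis" "mv' = win_move j b"
    unfolding win_moves_eq by blast
  from jb(1) show ?thesis
  proof (cases rule: Basis_triple_cases)
    case (1 b1)
    then show ?thesis
      using jb(2) by (intro bexI[of _ "\<lambda>t q. q"]) (auto simp: window_centre_def win_move_def zero_prod_def)
  next
    case (2 b2)
    then show ?thesis
      using euclid[of "(b2, 0)"] jb(2)
      by (intro bexI[of _ "if j = 0 then (\<lambda>t q. q + t *\<^sub>R (b2, 0)) else (\<lambda>t q. q)"])
        (auto simp: window_centre_def win_move_def Basis_prod_def)
  next
    case (3 b3)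
    then show ?thesis
      using euclid[of "(0, b3)"] jb(2)
      by (intro bexI[of _ "if j = 0 then (\<lambda>t q. q + t *\<^sub>R (0, b3)) else (\<lambda>t q. q)"])
        (auto simp: window_centre_def win_move_def Basis_prod_def)
  qed
qed

lemma smooth_wrt_mirror_substitution:
  fixes \<Phi> :: "(int \<Rightarrow> 'c::euclidean_space \<times> 'b::euclidean_space \<times> 'a::euclidean_space) \<Rightarrow> 'y::real_normed_vector"
    and H :: "'b \<times> 'c \<Rightarrow> 'b \<times> 'a"
  assumes \<Phi>: "smooth_wrt (win_moves UNIV) U \<Phi>" and H: "smooth_on W H"
  shows "smooth_wrt (win_moves UNIV)
      {s. window_centre s \<in> W \<and> mirror_window (s, H (window_centre s)) \<in> U}
      (\<lambda>s. \<Phi> (mirror_window (s, H (window_centre s))))"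
proof -
  have W: "open W"
    using H unfolding smooth_on_def by (rule smooth_wrt_open)
  have centre: "open (window_centre -` W :: (int \<Rightarrow> 'a \<times> 'b \<times> 'c) set)"
    by (rule open_vimage[OF W continuous_on_window_centre])
  have H_centre: "smooth_wrt (win_moves UNIV) (window_centre -` W)
      (\<lambda>s::int \<Rightarrow> 'a \<times> 'b \<times> 'c. H (window_centre s))"
    by (rule smooth_wrt_compose_intertwining[OF smooth_wrt_insert_stationary[OF H[unfolded smooth_on_def]]
          centre continuous_on_window_centre _ window_centre_intertwines]) auto
  have mirror: "open (mirror_window -` U :: ((int \<Rightarrow> 'a \<times> 'b \<times> 'c) \<times> ('b \<times> 'a)) set)"
    by (rule open_vimage[OF smooth_wrt_open[OF \<Phi>] continuous_on_mirror_window])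
  have \<Phi>_mirror: "smooth_wrt (product_moves (win_moves UNIV)) (mirror_window -` U)
      (\<lambda>p. \<Phi> (mirror_window p))"
    by (rule smooth_wrt_compose_intertwining[OF smooth_wrt_insert_stationary[OF \<Phi>] mirror
          continuous_on_subset[OF continuous_on_mirror_window subset_UNIV] _ mirror_window_intertwines])
      auto
  let ?S = "{s. window_centre s \<in> W \<and> mirror_window (s, H (window_centre s)) \<in> U}"
  have "continuous_on (window_centre -` W) (\<lambda>s. mirror_window (s, H (window_centre s)))"
    by (rule continuous_on_compose2[OF continuous_on_mirror_window
          continuous_on_Pair[OF continuous_on_id smooth_wrt_continuous_on[OF H_centre]]]) simp
  then have "open ((\<lambda>s. mirror_window (s, H (window_centre s))) -` U \<inter> window_centre -` W)"
    using centre smooth_wrt_open[OF \<Phi>] by (simp add: continuous_on_open_vimage)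
  moreover have "(\<lambda>s. mirror_window (s, H (window_centre s))) -` U \<inter> window_centre -` W = ?S"
    by auto
  ultimately have S: "open ?S"
    by simp
  have "smooth_wrt (win_moves UNIV) ?S (\<lambda>s. (\<lambda>p. \<Phi> (mirror_window p)) (s, H (window_centre s)))"
    using smooth_wrt_subset[OF H_centre subset_refl S]
    by (rule smooth_wrt_compose_graph[OF continuous_moves_win_moves _ \<Phi>_mirror]) auto
  then show ?thesis
    by simp
qed

section \<open>Flat outputs and parameterizations under time reversal\<close>

definition output_window :: "nat \<Rightarrow> nat \<Rightarrow> ((int \<Rightarrow> 'a \<times> 'b \<times> 'c) \<Rightarrow> 'd) \<Rightarrow> bool" where
  "output_window Q1 Q2 phi \<longleftrightarrow> (\<forall>s s'. (\<forall>j \<in> {- int Q1 .. -1}. fst (s j) = fst (s' j))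
     \<and> fst (snd (s 0)) = fst (snd (s' 0))
     \<and> (\<forall>j \<in> {0 .. int Q2}. snd (snd (s j)) = snd (snd (s' j))) \<longrightarrow> phi s = phi s')"

lemma depends_on_output_window:
  "output_window Q1 Q2 phi \<Longrightarrow> depends_on {- int Q1 .. int Q2} phi"
  unfolding output_window_def depends_on_def by auto

lemma output_window_subst_out:
  fixes phi :: "(int \<Rightarrow> 'u \<times> 'x \<times> 'u) \<Rightarrow> 'y"
  assumes "output_window Q1 Q2 phi"
  shows "output_window Q2 Q1 (subst_out P R phi)"
  unfolding output_window_def
proof (intro allI impI)
  fix s s' :: "int \<Rightarrow> 'u \<times> 'x \<times> 'u"
  assume H: "(\<forall>j \<in> {- int Q2 .. -1}. fst (s j) = fst (s' j)) \<and> fst (snd (s 0)) = fst (snd (s' 0))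
    \<and> (\<forall>j \<in> {0 .. int Q1}. snd (snd (s j)) = snd (snd (s' j)))"
  show "subst_out P R phi s = subst_out P R phi s'"
    unfolding subst_out_def
  proof (rule assms[unfolded output_window_def, rule_format], intro conjI ballI)
    fix j :: int assume "j \<in> {0 .. int Q2}"
    then show "snd (snd (snd (snd (s (- j))), P (fst (snd (s (- j)))) (snd (snd (s (- j)))),
          if j = 0 then R (fst (snd (s 0))) (snd (snd (s 0))) else fst (s (- j)))) =
        snd (snd (snd (snd (s' (- j))), P (fst (snd (s' (- j)))) (snd (snd (s' (- j)))),
          if j = 0 then R (fst (snd (s' 0))) (snd (snd (s' 0))) else fst (s' (- j))))"
      using H by (cases "j = 0") auto
  qed (use H in auto)
qed

lemma subst_out_eq_mirror_window:
  assumes "output_window Q1 Q2 phi"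
  shows "subst_out P R phi s = phi (mirror_window (s, (\<lambda>(a, b). (P a b, R a b)) (window_centre s)))"
  unfolding subst_out_def
  by (rule assms[unfolded output_window_def, rule_format])
    (auto simp: mirror_window_def window_centre_def split_beta)

lemma depends_on_param_z:
  assumes "depends_on {- int R1 .. int R2 - 1} Fx"
  shows "depends_on {- int R2 .. int R1 - 1} (param_z Fx)"
proof -
  have "depends_on ((\<lambda>j. - j - 1) ` {- int R1 .. int R2 - 1}) (param_z Fx)"
    unfolding param_z_def by (rule depends_on_reindex[OF assms])
  then show ?thesis
    by (rule depends_on_mono) auto
qed

lemma depends_on_param_v:
  assumes "depends_on {- int R1 .. int R2 - 1} Fx" "depends_on {- int R1 .. int R2} Fu"
  shows "depends_on {- int R2 .. int R1} (param_v g Fx Fu)"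
proof -
  have "depends_on {- int R1 .. int R2} Fx"
    using assms(1) by (rule depends_on_mono) auto
  then have "depends_on {- int R2 .. int R1} (\<lambda>w. Fx (\<lambda>j. w (- j)))"
    "depends_on {- int R2 .. int R1} (\<lambda>w. Fu (\<lambda>j. w (- j)))"
    using depends_on_reindex[of _ _ uminus] assms(2) by fastforce+
  then show ?thesis
    unfolding param_v_def depends_on_def by metis
qed

lemma shift_reflect: "shift k (\<lambda>l. y (- l)) (- j) = shift (- k) y j"
  by (simp add: shift_def algebra_simps)

lemma shift_reflect_pred: "shift k (\<lambda>l. y (- l)) (- j - 1) = shift (1 - k) y j"
  by (simp add: shift_def algebra_simps)

lemma param_z_reflect: "param_z Fx (shift k (\<lambda>l. y (- l))) = Fx (shift (1 - k) y)"
  by (simp add: param_z_def shift_reflect_pred)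

lemma param_v_reflect:
  "param_v g Fx Fu (shift k (\<lambda>l. y (- l))) = g (Fx (shift (- k) y)) (Fu (shift (- k) y))"
  by (simp add: param_v_def shift_reflect)

lemma shift_sig_const: "shift k (sig G (\<lambda>k. x) (\<lambda>k. u)) = (\<lambda>j. (G x u, x, u))"
  by (simp add: shift_def sig_def)

definition reversal :: "('x \<Rightarrow> 'u \<Rightarrow> 'u) \<Rightarrow> ('x \<Rightarrow> 'u \<Rightarrow> 'u)
    \<Rightarrow> (int \<Rightarrow> 'x) \<Rightarrow> (int \<Rightarrow> 'u) \<Rightarrow> (int \<Rightarrow> 'x) \<Rightarrow> (int \<Rightarrow> 'u) \<Rightarrow> bool"
  where "reversal g psi_u x u z v \<longleftrightarrow>
    (\<forall>j. x j = z (1 - j) \<and> v j = g (x (- j)) (u (- j)) \<and> u j = psi_u (z (- j)) (v (- j)))"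

lemma reversal_sym: "reversal g psi_u x u z v \<longleftrightarrow> reversal psi_u g z v x u"
proof -
  have "(\<forall>j. x j = z (1 - j)) \<Longrightarrow> z j = x (1 - j)" for x z :: "int \<Rightarrow> 'a" and j
    by (drule spec[of _ "1 - j"]) simp
  then have "(\<forall>j. x j = z (1 - j)) \<longleftrightarrow> (\<forall>j. z j = x (1 - j))"
    by blast
  then show ?thesis
    unfolding reversal_def by auto
qed

lemma reversal_at:
  assumes "reversal g psi_u x u z v"
  shows "(v (- j), z (1 - j), psi_u (z (- j)) (v (- j))) = (g (x j) (u j), x j, u j)"
  using assms unfolding reversal_def by (metis minus_minus)

lemma mirror_window_shift_sig:
  assumes rev: "reversal g psi_u x u z v" and traj: "traj psi_x z v"
  shows "mirror_window (shift k (sig psi_u z v),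
      (\<lambda>(a, b). (psi_x a b, psi_u a b)) (window_centre (shift k (sig psi_u z v))))
    = shift (- k) (sig g x u)"
proof
  fix i
  have "psi_x (z k) (v k) = z (k + 1)"
    using traj by (simp add: traj_def)
  then have "mirror_window (shift k (sig psi_u z v),
      (\<lambda>(a, b). (psi_x a b, psi_u a b)) (window_centre (shift k (sig psi_u z v)))) i
    = (v (- (i - k)), z (1 - (i - k)), psi_u (z (- (i - k))) (v (- (i - k))))"
    by (cases "i = 0") (simp_all add: mirror_window_def window_centre_def shift_def sig_def algebra_simps)
  also have "\<dots> = (g (x (i - k)) (u (i - k)), x (i - k), u (i - k))"
    by (rule reversal_at[OF rev])
  also have "\<dots> = shift (- k) (sig g x u) i"
    by (simp add: shift_def sig_def)
  finally show "mirror_window (shift k (sig psi_u z v),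
      (\<lambda>(a, b). (psi_x a b, psi_u a b)) (window_centre (shift k (sig psi_u z v)))) i
    = shift (- k) (sig g x u) i" .
qed

section \<open>The associated system\<close>

locale inverse_pair =
  fixes f :: "'x::euclidean_space \<Rightarrow> 'u::euclidean_space \<Rightarrow> 'x" and g :: "'x \<Rightarrow> 'u \<Rightarrow> 'u"
    and psi_x :: "'x \<Rightarrow> 'u \<Rightarrow> 'x" and psi_u :: "'x \<Rightarrow> 'u \<Rightarrow> 'u"
    and A B :: "('x \<times> 'u) set"
  assumes image: "(\<lambda>(x, u). (f x u, g x u)) ` A = B"
    and psi_left: "\<And>x u. (x, u) \<in> A \<Longrightarrow> psi_x (f x u) (g x u) = x \<and> psi_u (f x u) (g x u) = u"
    and psi_right: "\<And>z v. (z, v) \<in> B \<Longrightarrow> f (psi_x z v) (psi_u z v) = z \<and> g (psi_x z v) (psi_u z v) = v"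
    and fg_smooth: "smooth_on A (\<lambda>(x, u). (f x u, g x u))"
    and psi_smooth: "smooth_on B (\<lambda>(z, v). (psi_x z v, psi_u z v))"
begin

lemma fg_in_B: "(x, u) \<in> A \<Longrightarrow> (f x u, g x u) \<in> B"
  using image by force

lemma psi_in_A: "(z, v) \<in> B \<Longrightarrow> (psi_x z v, psi_u z v) \<in> A"
  using image psi_left by force

lemma swap: "inverse_pair psi_x psi_u f g B A"
proof
  show "(\<lambda>(z, v). (psi_x z v, psi_u z v)) ` B = A"
  proof
    show "(\<lambda>(z, v). (psi_x z v, psi_u z v)) ` B \<subseteq> A"
      using psi_in_A by auto
    show "A \<subseteq> (\<lambda>(z, v). (psi_x z v, psi_u z v)) ` B"
    proof
      fix p assume "p \<in> A"
      moreover obtain x u where "p = (x, u)"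
        by fastforce
      ultimately have "p = (\<lambda>(z, v). (psi_x z v, psi_u z v)) (f x u, g x u)" "(f x u, g x u) \<in> B"
        using psi_left fg_in_B by auto
      then show "p \<in> (\<lambda>(z, v). (psi_x z v, psi_u z v)) ` B"
        by (rule image_eqI)
    qed
  qed
  show "\<And>z v. (z, v) \<in> B \<Longrightarrow> f (psi_x z v) (psi_u z v) = z \<and> g (psi_x z v) (psi_u z v) = v"
    by (rule psi_right)
  show "\<And>x u. (x, u) \<in> A \<Longrightarrow> psi_x (f x u) (g x u) = x \<and> psi_u (f x u) (g x u) = u"
    by (rule psi_left)
qed (rule psi_smooth, rule fg_smooth)

lemma open_A: "open A"
  using fg_smooth unfolding smooth_on_def by (rule smooth_wrt_open)

lemma g_smooth: "smooth_on A (\<lambda>(x, u). g x u)"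
  using smooth_wrt_bounded_linear[OF continuous_moves_euclid_moves bounded_linear_snd
      fg_smooth[unfolded smooth_on_def]]
  unfolding smooth_on_def by (simp add: case_prod_unfold)

lemma reversal_of_traj:
  assumes traj: "traj f x u" and A: "\<And>k. (x k, u k) \<in> A"
  defines "z \<equiv> \<lambda>j. x (1 - j)" and "v \<equiv> \<lambda>j. g (x (- j)) (u (- j))"
  shows "traj psi_x z v" "reversal g psi_u x u z v" "(z k, v k) \<in> B"
proof -
  have z: "z j = f (x (- j)) (u (- j))" for j
    using traj[unfolded traj_def, rule_format, of "- j"] by (simp add: z_def)
  show "traj psi_x z v"
    unfolding traj_def
  proof
    fix k
    have "z (k + 1) = x (- k)"
      by (simp add: z_def)
    then show "z (k + 1) = psi_x (z k) (v k)"
      using psi_left[OF A] by (simp add: z v_def)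
  qed
  have "x (1 + j) = f (x j) (u j)" for j
    using traj[unfolded traj_def, rule_format, of j] by (simp add: add.commute)
  then show "reversal g psi_u x u z v"
    unfolding reversal_def z_def v_def using psi_left[OF A] by simp
  show "(z k, v k) \<in> B"
    unfolding z v_def using fg_in_B[OF A] .
qed

lemma reversal_of_associated_traj:
  assumes traj: "traj psi_x z v" and B: "\<And>k. (z k, v k) \<in> B"
  defines "x \<equiv> \<lambda>j. z (1 - j)" and "u \<equiv> \<lambda>j. psi_u (z (- j)) (v (- j))"
  shows "traj f x u" "reversal g psi_u x u z v" "(x k, u k) \<in> A"
  using inverse_pair.reversal_of_traj[OF swap traj B] reversal_sym unfolding x_def u_def by blast+

end

locale flat_parameterization =
  fixes F :: "'x::euclidean_space \<Rightarrow> 'u::euclidean_space \<Rightarrow> 'x" and G :: "'x \<Rightarrow> 'u \<Rightarrow> 'u"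
    and x0 :: 'x and u0 :: 'u
    and phi :: "(int \<Rightarrow> 'u \<times> 'x \<times> 'u) \<Rightarrow> 'u"
    and Fx :: "(int \<Rightarrow> 'u) \<Rightarrow> 'x" and Fu :: "(int \<Rightarrow> 'u) \<Rightarrow> 'u"
    and Q1 Q2 R1 R2 :: nat and U :: "(int \<Rightarrow> 'u \<times> 'x \<times> 'u) set" and V :: "(int \<Rightarrow> 'u) set"
  assumes phi_window: "output_window Q1 Q2 phi"
    and Fx_window: "depends_on {- int R1 .. int R2 - 1} Fx"
    and Fu_window: "depends_on {- int R1 .. int R2} Fu"
    and equilibrium_in_U: "(\<lambda>j. (G x0 u0, x0, u0)) \<in> U"
    and phi_smooth: "smooth_wrt (win_moves {- int Q1 .. int Q2}) U phi"
    and equilibrium_in_V: "(\<lambda>j. phi (\<lambda>i. (G x0 u0, x0, u0))) \<in> V"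
    and Fx_smooth: "smooth_wrt (win_moves {- int R1 .. int R2}) V Fx"
    and Fu_smooth: "smooth_wrt (win_moves {- int R1 .. int R2}) V Fu"
    and flat_output_of_traj: "\<And>x u. traj F x u \<Longrightarrow> \<forall>k. shift k (sig G x u) \<in> U \<Longrightarrow>
      let y = (\<lambda>k. phi (shift k (sig G x u)))
      in (\<forall>k. shift k y \<in> V) \<and> (\<forall>k. x k = Fx (shift k y) \<and> u k = Fu (shift k y))"
    and traj_of_flat_output: "\<And>y. \<forall>k. shift k y \<in> V \<Longrightarrow>
      let x = (\<lambda>k. Fx (shift k y)); u = (\<lambda>k. Fu (shift k y))
      in traj F x u \<and> (\<forall>k. shift k (sig G x u) \<in> U) \<and> (\<forall>k. phi (shift k (sig G x u)) = y k)"

lemma flat_with_iff: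
  "flat_with F G x0 u0 phi Fx Fu \<longleftrightarrow>
    (\<exists>Q1 Q2 R1 R2 U V. flat_parameterization F G x0 u0 phi Fx Fu Q1 Q2 R1 R2 U V)"
  unfolding flat_with_def flat_parameterization_def output_window_def depends_on_def
  by (simp only: conj_assoc imp_conjL)

context flat_parameterization
begin

lemma phi_smooth_UNIV: "smooth_wrt (win_moves UNIV) U phi"
  using phi_smooth depends_on_output_window[OF phi_window] by (rule smooth_wrt_win_moves_UNIV) simp

lemma Fx_smooth_UNIV: "smooth_wrt (win_moves UNIV) V Fx"
  using Fx_smooth Fx_window by (rule smooth_wrt_win_moves_UNIV) auto

lemma Fu_smooth_UNIV: "smooth_wrt (win_moves UNIV) V Fu"
  using Fu_smooth Fu_window by (rule smooth_wrt_win_moves_UNIV) simp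

lemma parameters_at_equilibrium:
  assumes "F x0 u0 = x0"
  shows "Fx (\<lambda>j. phi (\<lambda>i. (G x0 u0, x0, u0))) = x0" "Fu (\<lambda>j. phi (\<lambda>i. (G x0 u0, x0, u0))) = u0"
proof -
  have "traj F (\<lambda>k. x0) (\<lambda>k. u0)"
    using assms by (simp add: traj_def)
  moreover have "\<forall>k. shift k (sig G (\<lambda>k. x0) (\<lambda>k. u0)) \<in> U"
    using equilibrium_in_U by (simp add: shift_sig_const)
  ultimately have "x0 = Fx (shift 0 (\<lambda>k. phi (\<lambda>i. (G x0 u0, x0, u0))))"
    "u0 = Fu (shift 0 (\<lambda>k. phi (\<lambda>i. (G x0 u0, x0, u0))))"
    using flat_output_of_traj[of "\<lambda>k. x0" "\<lambda>k. u0"] by (simp_all add: shift_sig_const Let_def)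
  then show "Fx (\<lambda>j. phi (\<lambda>i. (G x0 u0, x0, u0))) = x0" "Fu (\<lambda>j. phi (\<lambda>i. (G x0 u0, x0, u0))) = u0"
    by (simp_all add: shift_def)
qed

end

locale time_reversal =
  inverse_pair f g psi_x psi_u A B + flat_parameterization f g x0 u0 phi Fx Fu Q1 Q2 R1 R2 U V
  for f :: "'x::euclidean_space \<Rightarrow> 'u::euclidean_space \<Rightarrow> 'x" and g psi_x psi_u A B x0 u0 phi Fx Fu
    Q1 Q2 R1 R2 U V +
  assumes equilibrium: "f x0 u0 = x0" and equilibrium_in_A: "(x0, u0) \<in> A"
begin

definition U_assoc :: "(int \<Rightarrow> 'u \<times> 'x \<times> 'u) set" where
  "U_assoc = {s. window_centre s \<in> B \<and>
     mirror_window (s, (\<lambda>(z, v). (psi_x z v, psi_u z v)) (window_centre s)) \<in> U}"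

definition V_assoc :: "(int \<Rightarrow> 'u) set" where
  "V_assoc = {w. (\<lambda>j. w (- j)) \<in> V \<and> (\<lambda>j. w (- j - 1)) \<in> V \<and>
     (Fx (\<lambda>j. w (- j)), Fu (\<lambda>j. w (- j))) \<in> A}"

lemma psi_at_equilibrium: "psi_x x0 (g x0 u0) = x0" "psi_u x0 (g x0 u0) = u0"
  using psi_left[OF equilibrium_in_A] equilibrium by auto

lemma subst_out_eq:
  "subst_out psi_x psi_u phi = (\<lambda>s. phi (mirror_window (s, (\<lambda>(z, v). (psi_x z v, psi_u z v)) (window_centre s))))"
  by (rule ext) (rule subst_out_eq_mirror_window[OF phi_window])

lemma assoc_output_smooth:
  "smooth_wrt (win_moves {- int Q2 .. int Q1}) U_assoc (subst_out psi_x psi_u phi)"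
proof -
  have smooth: "smooth_wrt (win_moves UNIV) U_assoc (subst_out psi_x psi_u phi)"
    unfolding U_assoc_def subst_out_eq
    by (rule smooth_wrt_mirror_substitution[OF phi_smooth_UNIV psi_smooth])
  show ?thesis
    by (rule smooth_wrt_subset[OF smooth win_moves_mono[OF subset_UNIV] smooth_wrt_open[OF smooth]
          subset_refl])
qed

lemma reflected_parameters_smooth:
  "smooth_wrt (win_moves UNIV) {w. (\<lambda>j. w (- j)) \<in> V} (\<lambda>w. (Fx (\<lambda>j. w (- j)), Fu (\<lambda>j. w (- j))))"
  using smooth_wrt_reflect[OF Fx_smooth_UNIV, of 0] smooth_wrt_reflect[OF Fu_smooth_UNIV, of 0]
  by (intro smooth_wrt_Pair continuous_moves_win_moves) simp_all

lemma param_z_smooth_UNIV: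
  "smooth_wrt (win_moves UNIV) {w. (\<lambda>j. w (- j - 1)) \<in> V} (param_z Fx)"
proof -
  have "(\<lambda>j. w (- 1 - j)) = (\<lambda>j. w (- j - 1))" for w :: "int \<Rightarrow> 'u"
    by (rule ext, rule arg_cong[where f = w]) simp
  then show ?thesis
    using smooth_wrt_reflect[OF Fx_smooth_UNIV, of "- 1"] by (simp add: param_z_def)
qed

lemma open_V_assoc: "open V_assoc"
proof -
  let ?P = "\<lambda>w. (Fx (\<lambda>j. w (- j)), Fu (\<lambda>j. w (- j)))"
  have "open (?P -` A \<inter> {w. (\<lambda>j. w (- j)) \<in> V})"
    using smooth_wrt_continuous_on[OF reflected_parameters_smooth] open_A
      smooth_wrt_open[OF reflected_parameters_smooth]
    by (simp add: continuous_on_open_vimage)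
  then have "open (?P -` A \<inter> {w. (\<lambda>j. w (- j)) \<in> V} \<inter> {w. (\<lambda>j. w (- j - 1)) \<in> V})"
    using smooth_wrt_open[OF param_z_smooth_UNIV] by (rule open_Int)
  moreover have "?P -` A \<inter> {w. (\<lambda>j. w (- j)) \<in> V} \<inter> {w. (\<lambda>j. w (- j - 1)) \<in> V} = V_assoc"
    unfolding V_assoc_def by auto
  ultimately show ?thesis
    by simp
qed

lemma param_z_smooth: "smooth_wrt (win_moves {- int R2 .. int R1}) V_assoc (param_z Fx)"
  by (rule smooth_wrt_subset[OF param_z_smooth_UNIV win_moves_mono[OF subset_UNIV] open_V_assoc])
    (auto simp: V_assoc_def)

lemma param_v_smooth: "smooth_wrt (win_moves {- int R2 .. int R1}) V_assoc (param_v g Fx Fu)"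
proof -
  have "smooth_wrt (win_moves UNIV) V_assoc
      (\<lambda>w. (\<lambda>(x, u). g x u) (Fx (\<lambda>j. w (- j)), Fu (\<lambda>j. w (- j))))"
    using smooth_wrt_subset[OF reflected_parameters_smooth subset_refl open_V_assoc]
    by (rule smooth_wrt_compose_smooth_on[OF continuous_moves_win_moves _ g_smooth])
      (auto simp: V_assoc_def)
  then have "smooth_wrt (win_moves UNIV) V_assoc (param_v g Fx Fu)"
    by (simp add: param_v_def)
  then show ?thesis
    by (rule smooth_wrt_subset[OF _ win_moves_mono[OF subset_UNIV] open_V_assoc subset_refl])
qed

lemma mirror_window_equilibrium:
  "mirror_window ((\<lambda>i. (psi_u x0 (g x0 u0), x0, g x0 u0)),
     (\<lambda>(z, v). (psi_x z v, psi_u z v)) (window_centre (\<lambda>i. (psi_u x0 (g x0 u0), x0, g x0 u0))))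
   = (\<lambda>j. (g x0 u0, x0, u0))"
  by (simp add: mirror_window_def window_centre_def psi_at_equilibrium fun_eq_iff)

lemma assoc_equilibrium_in_U: "(\<lambda>j. (psi_u x0 (g x0 u0), x0, g x0 u0)) \<in> U_assoc"
  using mirror_window_equilibrium equilibrium_in_U fg_in_B[OF equilibrium_in_A] equilibrium
  by (simp add: U_assoc_def window_centre_def)

lemma assoc_equilibrium_in_V:
  "(\<lambda>j. subst_out psi_x psi_u phi (\<lambda>i. (psi_u x0 (g x0 u0), x0, g x0 u0))) \<in> V_assoc"
  using mirror_window_equilibrium equilibrium_in_V equilibrium_in_A
    parameters_at_equilibrium[OF equilibrium]
  by (simp add: subst_out_eq V_assoc_def)

lemma reflect_in_V_assoc:
  "shift k (\<lambda>l. y (- l)) \<in> V_assoc \<longleftrightarrow>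
    shift (- k) y \<in> V \<and> shift (1 - k) y \<in> V \<and> (Fx (shift (- k) y), Fu (shift (- k) y)) \<in> A"
  by (simp add: V_assoc_def shift_reflect shift_reflect_pred)

lemma assoc_flat_output_of_traj:
  assumes traj: "traj psi_x z v" and U: "\<forall>k. shift k (sig psi_u z v) \<in> U_assoc"
  defines "Y \<equiv> \<lambda>k. subst_out psi_x psi_u phi (shift k (sig psi_u z v))"
  shows "(\<forall>k. shift k Y \<in> V_assoc) \<and>
    (\<forall>k. z k = param_z Fx (shift k Y) \<and> v k = param_v g Fx Fu (shift k Y))"
proof -
  have B: "(z k, v k) \<in> B" for k
    using U by (simp add: U_assoc_def window_centre_def shift_def sig_def)
  define x where "x = (\<lambda>j. z (1 - j))"
  define u where "u = (\<lambda>j. psi_u (z (- j)) (v (- j)))"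
  have xu: "traj f x u" "reversal g psi_u x u z v" "(x k, u k) \<in> A" for k
    unfolding x_def u_def by (rule reversal_of_associated_traj[OF traj B])+
  have "shift k (sig g x u) \<in> U" for k
    using U[rule_format, of "- k"] mirror_window_shift_sig[OF xu(2) traj, of "- k"]
    by (simp add: U_assoc_def)
  then have "let y = (\<lambda>k. phi (shift k (sig g x u)))
      in (\<forall>k. shift k y \<in> V) \<and> (\<forall>k. x k = Fx (shift k y) \<and> u k = Fu (shift k y))"
    using flat_output_of_traj[OF xu(1)] by blast
  then obtain y where y: "\<And>k. shift k y \<in> V" "\<And>k. Fx (shift k y) = x k" "\<And>k. Fu (shift k y) = u k"
    and y_def: "y = (\<lambda>k. phi (shift k (sig g x u)))"
    unfolding Let_def by auto
  have "Y = (\<lambda>k. y (- k))"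
    unfolding Y_def subst_out_eq mirror_window_shift_sig[OF xu(2) traj] y_def ..
  moreover have "x (1 - k) = z k" "v k = g (x (- k)) (u (- k))" for k
    using xu(2) unfolding reversal_def by (simp, blast)
  ultimately show ?thesis
    using y xu(3) by (simp add: reflect_in_V_assoc param_z_reflect param_v_reflect)
qed

lemma assoc_traj_of_flat_output:
  assumes V: "\<forall>k. shift k Y \<in> V_assoc"
  defines "z \<equiv> \<lambda>k. param_z Fx (shift k Y)" and "v \<equiv> \<lambda>k. param_v g Fx Fu (shift k Y)"
  shows "traj psi_x z v \<and> (\<forall>k. shift k (sig psi_u z v) \<in> U_assoc) \<and>
    (\<forall>k. subst_out psi_x psi_u phi (shift k (sig psi_u z v)) = Y k)"
proof -
  define y where "y = (\<lambda>k. Y (- k))"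
  have Y: "Y = (\<lambda>k. y (- k))"
    by (simp add: y_def)
  have y: "shift k y \<in> V" "(Fx (shift k y), Fu (shift k y)) \<in> A" for k
    using V[rule_format, of "- k"] unfolding Y reflect_in_V_assoc by simp_all
  define x where "x = (\<lambda>k. Fx (shift k y))"
  define u where "u = (\<lambda>k. Fu (shift k y))"
  have xu: "traj f x u" "\<forall>k. shift k (sig g x u) \<in> U" "\<forall>k. phi (shift k (sig g x u)) = y k"
    using traj_of_flat_output[of y] y(1) unfolding x_def u_def Let_def by blast+
  have "z = (\<lambda>j. x (1 - j))" "v = (\<lambda>j. g (x (- j)) (u (- j)))"
    unfolding z_def v_def x_def u_def Y by (simp_all add: param_z_reflect param_v_reflect)
  then have zv: "traj psi_x z v" "reversal g psi_u x u z v" "(z k, v k) \<in> B" for k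
    using reversal_of_traj[OF xu(1)] y(2) by (simp_all add: x_def u_def)
  show ?thesis
  proof (intro conjI allI)
    show "traj psi_x z v"
      by (rule zv(1))
    fix k
    have "shift (- k) (sig g x u) \<in> U" "phi (shift (- k) (sig g x u)) = y (- k)"
      using xu(2,3) by blast+
    then show "shift k (sig psi_u z v) \<in> U_assoc"
      and "subst_out psi_x psi_u phi (shift k (sig psi_u z v)) = Y k"
      using zv(3)[of k] mirror_window_shift_sig[OF zv(2,1), of k]
      by (simp_all add: U_assoc_def subst_out_eq window_centre_def shift_def sig_def y_def)
  qed
qed

lemma associated_flat_parameterization:
  "flat_parameterization psi_x psi_u x0 (g x0 u0) (subst_out psi_x psi_u phi) (param_z Fx)
    (param_v g Fx Fu) Q2 Q1 R2 R1 U_assoc V_assoc"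
proof
  show "output_window Q2 Q1 (subst_out psi_x psi_u phi)"
    by (rule output_window_subst_out[OF phi_window])
  show "depends_on {- int R2 .. int R1 - 1} (param_z Fx)"
    by (rule depends_on_param_z[OF Fx_window])
  show "depends_on {- int R2 .. int R1} (param_v g Fx Fu)"
    by (rule depends_on_param_v[OF Fx_window Fu_window])
  show "(\<lambda>j. (psi_u x0 (g x0 u0), x0, g x0 u0)) \<in> U_assoc"
    by (rule assoc_equilibrium_in_U)
  show "(\<lambda>j. subst_out psi_x psi_u phi (\<lambda>i. (psi_u x0 (g x0 u0), x0, g x0 u0))) \<in> V_assoc"
    by (rule assoc_equilibrium_in_V)
  show "smooth_wrt (win_moves {- int Q2 .. int Q1}) U_assoc (subst_out psi_x psi_u phi)"
    by (rule assoc_output_smooth)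
  show "smooth_wrt (win_moves {- int R2 .. int R1}) V_assoc (param_z Fx)"
    by (rule param_z_smooth)
  show "smooth_wrt (win_moves {- int R2 .. int R1}) V_assoc (param_v g Fx Fu)"
    by (rule param_v_smooth)
  show "\<And>z v. traj psi_x z v \<Longrightarrow> \<forall>k. shift k (sig psi_u z v) \<in> U_assoc \<Longrightarrow>
      let Y = \<lambda>k. subst_out psi_x psi_u phi (shift k (sig psi_u z v))
      in (\<forall>k. shift k Y \<in> V_assoc) \<and>
         (\<forall>k. z k = param_z Fx (shift k Y) \<and> v k = param_v g Fx Fu (shift k Y))"
    unfolding Let_def by (rule assoc_flat_output_of_traj)
  show "\<And>Y. \<forall>k. shift k Y \<in> V_assoc \<Longrightarrow>
      let z = \<lambda>k. param_z Fx (shift k Y); v = \<lambda>k. param_v g Fx Fu (shift k Y)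
      in traj psi_x z v \<and> (\<forall>k. shift k (sig psi_u z v) \<in> U_assoc) \<and>
         (\<forall>k. subst_out psi_x psi_u phi (shift k (sig psi_u z v)) = Y k)"
    unfolding Let_def by (rule assoc_traj_of_flat_output)
qed

end

lemma flat_with_associated:
  assumes "inverse_pair f g psi_x psi_u A B" "f x0 u0 = x0" "(x0, u0) \<in> A"
    and "flat_with f g x0 u0 phi Fx Fu"
  shows "flat_with psi_x psi_u x0 (g x0 u0) (subst_out psi_x psi_u phi) (param_z Fx) (param_v g Fx Fu)"
proof -
  obtain Q1 Q2 R1 R2 U V where "flat_parameterization f g x0 u0 phi Fx Fu Q1 Q2 R1 R2 U V"
    using assms(4) flat_with_iff by blast
  with assms(1-3) have "time_reversal f g psi_x psi_u A B x0 u0 phi Fx Fu Q1 Q2 R1 R2 U V"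
    by (simp add: time_reversal_def time_reversal_axioms_def)
  then show ?thesis
    unfolding flat_with_iff by (blast dest: time_reversal.associated_flat_parameterization)
qed

lemma is_flat_output_of_associated:
  assumes "inverse_pair f g psi_x psi_u A B" "f x0 u0 = x0" "(x0, u0) \<in> A"
    and "is_flat_output psi_x psi_u x0 (g x0 u0) phihat"
  shows "is_flat_output f g x0 u0 (subst_out f g phihat)"
proof -
  interpret inverse_pair f g psi_x psi_u A B
    by (rule assms(1))
  have equilibrium: "psi_x x0 (g x0 u0) = x0" "psi_u x0 (g x0 u0) = u0" "(x0, g x0 u0) \<in> B"
    using psi_left[OF assms(3)] fg_in_B[OF assms(3)] assms(2) by auto
  obtain Fz Fv where "flat_with psi_x psi_u x0 (g x0 u0) phihat Fz Fv"
    using assms(4) unfolding is_flat_output_def by blast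
  from flat_with_associated[OF swap equilibrium(1,3) this]
  show ?thesis
    unfolding is_flat_output_def equilibrium(2) by blast
qed

theorem theorem3:
  fixes f :: "real^'n \<Rightarrow> real^'m \<Rightarrow> real^'n"
    and g :: "real^'n \<Rightarrow> real^'m \<Rightarrow> real^'m"
    and psi_x :: "real^'n \<Rightarrow> real^'m \<Rightarrow> real^'n"
    and psi_u :: "real^'n \<Rightarrow> real^'m \<Rightarrow> real^'m"
    and x0 :: "real^'n" and u0 :: "real^'m"
    and A B :: "((real^'n) \<times> (real^'m)) set"
  assumes f_smooth: "smooth_on UNIV (\<lambda>(x, u). f x u)"
    and g_smooth: "smooth_on UNIV (\<lambda>(x, u). g x u)"
    and rank_u: "\<And>x u. dim (range (frechet_derivative (\<lambda>u'. f x u') (at u))) = CARD('m)"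
    and rank_xu: "\<And>x u. dim (range (frechet_derivative (\<lambda>(x', u'). f x' u') (at (x, u)))) = CARD('n)"
    and equil: "f x0 u0 = x0"
    and A_open: "open A" and B_open: "open B" and x0u0_A: "(x0, u0) \<in> A"
    and fg_image: "(\<lambda>(x, u). (f x u, g x u)) ` A = B"
    and psi_left: "\<And>x u. (x, u) \<in> A \<Longrightarrow> psi_x (f x u) (g x u) = x \<and> psi_u (f x u) (g x u) = u"
    and psi_right: "\<And>z v. (z, v) \<in> B \<Longrightarrow> f (psi_x z v) (psi_u z v) = z \<and> g (psi_x z v) (psi_u z v) = v"
    and psi_smooth: "smooth_on B (\<lambda>(z, v). (psi_x z v, psi_u z v))"
  shows "(flat psi_x psi_u x0 (g x0 u0) \<longleftrightarrow> flat f g x0 u0)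
    \<and> (\<forall>phi Fx Fu. flat_with f g x0 u0 phi Fx Fu \<longrightarrow>
          flat_with psi_x psi_u x0 (g x0 u0) (subst_out psi_x psi_u phi) (param_z Fx) (param_v g Fx Fu))
    \<and> (\<forall>phihat. is_flat_output psi_x psi_u x0 (g x0 u0) phihat \<longrightarrow>
          is_flat_output f g x0 u0 (subst_out f g phihat))"
proof -
  txt \<open>The rank conditions only ensure that a local inverse \<open>\<psi>\<close> exists, and it is given here;
    \<open>B_open\<close> follows from \<open>psi_smooth\<close>.\<close>
  have "smooth_on A (\<lambda>(x, u). (f x u, g x u))"
    using smooth_on_Pair_subset[OF f_smooth g_smooth A_open] by (simp add: case_prod_unfold)
  then have pair: "inverse_pair f g psi_x psi_u A B"
    by (simp add: inverse_pair_def fg_image psi_left psi_right psi_smooth)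
  have to_associated: "\<forall>phi Fx Fu. flat_with f g x0 u0 phi Fx Fu \<longrightarrow>
      flat_with psi_x psi_u x0 (g x0 u0) (subst_out psi_x psi_u phi) (param_z Fx) (param_v g Fx Fu)"
    using flat_with_associated[OF pair equil x0u0_A] by blast
  have from_associated: "\<forall>phihat. is_flat_output psi_x psi_u x0 (g x0 u0) phihat \<longrightarrow>
      is_flat_output f g x0 u0 (subst_out f g phihat)"
    using is_flat_output_of_associated[OF pair equil x0u0_A] by blast
  have "flat psi_x psi_u x0 (g x0 u0) \<longleftrightarrow> flat f g x0 u0"
    using to_associated from_associated unfolding flat_def is_flat_output_def by blast
  with to_associated from_associated show ?thesis
    by blast
qed

end
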